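(* In $\mathrm{F}_H$, if $\emptyset \vdash e : T$, then either $e \longrightarrow e'$ for some $e'$, or $e$ is a value, or $e = \Uparrow\ell$ for some blame label $\ell$.
   Context: Syntax of $\mathrm{F}_H$. Base types $B$ include $\mathsf{Bool}$; each $B$ has a set $\mathcal{K}_B$ of constants ($\mathcal{K}_{\mathsf{Bool}}=\{\mathsf{true},\mathsf{false}\}$). Primitive operations $\mathtt{op}$ have denotations $[\![\mathtt{op}]\!]$ (partial functions from tuples of constants to constants). Types $T ::= B \mid \alpha \mid x{:}T_1\to T_2 \mid \forall\alpha.T \mid \{x{:}T \mid e\}$; $T_1\to T_2$ abbreviates $x{:}T_1\to T_2$ with $x$ not free in $T_2$. Values $v ::= k \mid \lambda x{:}T.e \mid \Lambda\alpha.e \mid \langle T_1\Rightarrow T_2\rangle^{\ell}$. Terms $e ::= v \mid x \mid \mathtt{op}(e_1,\dots,e_n) \mid e_1\,e_2 \mid e\,T \mid \langle\!\langle \{x{:}T_1\mid e_1\}, e_2\rangle\!\rangle^{\ell} \mid \langle \{x{:}T_1\mid e_1\}, e_2, v\rangle^{\ell} \mid \Uparrow\ell$. Substitution is capture-avoiding; $\mathsf{let}\ y{:}T=e_1\ \mathsf{in}\ e_2$ means $(\lambda y{:}T.e_2)\,e_1$. Semantics. Reduction $\rightsquigarrow$: $\mathtt{op}(k_1,\dots,k_n)\rightsquigarrow[\![\mathtt{op}]\!](k_1,\dots,k_n)$; $(\lambda x{:}T.e)\,v\rightsquigarrow e[v/x]$; $(\Lambda\alpha.e)\,T\rightsquigarrow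 e[T/\alpha]$; $\langle B\Rightarrow B\rangle^\ell v\rightsquigarrow v$; $\langle x{:}T_{11}\to T_{12}\Rightarrow x{:}T_{21}\to T_{22}\rangle^\ell v\rightsquigarrow \lambda x{:}T_{21}.\,\mathsf{let}\ y{:}T_{11}=\langle T_{21}\Rightarrow T_{11}\rangle^\ell x\ \mathsf{in}\ \langle T_{12}[y/x]\Rightarrow T_{22}\rangle^\ell (v\,y)$ ($y$ fresh); $\langle\forall\alpha.T_1\Rightarrow\forall\alpha.T_2\rangle^\ell v\rightsquigarrow\Lambda\alpha.\langle T_1\Rightarrow T_2\rangle^\ell(v\,\alpha)$; $\langle\{x{:}T_1\mid e_1\}\Rightarrow T_2\rangle^\ell v\rightsquigarrow\langle T_1\Rightarrow T_2\rangle^\ell v$; $\langle T_1\Rightarrow\{x{:}T_2\mid e_2\}\rangle^\ell v\rightsquigarrow\langle\!\langle\{x{:}T_2\mid e_2\},\langle T_1\Rightarrow T_2\rangle^\ell v\rangle\!\rangle^\ell$ if $T_1$ is not a refinement type; $\langle\!\langle\{x{:}T\mid e\},v\rangle\!\rangle^\ell\rightsquigarrow\langle\{x{:}T\mid e\},e[v/x],v\rangle^\ell$; $\langle\{x{:}T\mid e\},\mathsf{true},v\rangle^\ell\rightsquigarrow v$; $\langle\{x{:}T\mid e\},\mathsf{false},v\rangle^\ell\rightsquigarrow\Uparrow\ell$. Evaluation contexts $E ::= [\,] \mid \mathtt{op}(v_1,\dots,v_n,E,e_1,\dots,e_m) \mid E\,e \mid v\,E \mid E\,T \mid \langle\!\langle\{x{:}T\mid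 e\},E\rangle\!\rangle^\ell \mid \langle\{x{:}T\mid e\},E,v\rangle^\ell$; $E[e_1]\longrightarrow E[e_2]$ if $e_1\rightsquigarrow e_2$, and $E[\Uparrow\ell]\longrightarrow\Uparrow\ell$ if $E\ne[\,]$; $\longrightarrow^*$ is its reflexive–transitive closure. Typing. Contexts $\Gamma ::= \emptyset \mid \Gamma,x{:}T \mid \Gamma,\alpha$ (distinct variables). Each constant has a type $\mathsf{ty}(k)$ and each operation a type $\mathsf{ty}(\mathtt{op})=x_1{:}T_1\to\dots\to x_n{:}T_n\to T_0$. Let $\mathit{unref}(\{x{:}T\mid e\})=\mathit{unref}(T)$ and $\mathit{unref}(T)=T$ otherwise. Assumed: for $k\in\mathcal{K}_B$, $\mathit{unref}(\mathsf{ty}(k))=B$, $\emptyset\vdash\mathsf{ty}(k)$ and $\langle B\Rightarrow\mathsf{ty}(k)\rangle^\ell k\longrightarrow^* k$; each $\mathit{unref}(T_i)$ ($0\le i\le n$) for $\mathsf{ty}(\mathtt{op})$ is a base type, and if $k_i\in\mathcal{K}_{\mathit{unref}(T_i)}$ with $\langle \mathit{unref}(T_i)\Rightarrow T_i[k_1/x_1,\dots,k_{i-1}/x_{i-1}]\rangle^\ell k_i\longrightarrow^* k_i$ for all $1\le i\le n$, then $[\![\mathtt{op}]\!](k_1,\dots,k_n)=k\in\mathcal{K}_{\mathit{unref}(T_0)}$ with $\langle\mathit{unref}(T_0)\Rightarrow T_0[k_1/x_1,\dots,k_n/x_n]\rangle^\ell k\longrightarrow^* k$, while $[\![\mathtt{op}]\!](k_1,\dots,k_n)$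 is undefined if some $k_i$ fails this condition. Well-formedness: $\vdash\emptyset$; $\vdash\Gamma,x{:}T$ if $\vdash\Gamma$, $\Gamma\vdash T$; $\vdash\Gamma,\alpha$ if $\vdash\Gamma$. $\Gamma\vdash B$ if $\vdash\Gamma$; $\Gamma\vdash\alpha$ if $\vdash\Gamma$, $\alpha\in\Gamma$; $\Gamma\vdash x{:}T_1\to T_2$ if $\Gamma\vdash T_1$ and $\Gamma,x{:}T_1\vdash T_2$; $\Gamma\vdash\forall\alpha.T$ if $\Gamma,\alpha\vdash T$; $\Gamma\vdash\{x{:}T\mid e\}$ if $\Gamma\vdash T$ and $\Gamma,x{:}T\vdash e:\mathsf{Bool}$. Compatibility $T_1\parallel T_2$: $B\parallel B$; $\alpha\parallel\alpha$; $\{x{:}T_1\mid e\}\parallel T_2$ and $T_1\parallel\{x{:}T_2\mid e\}$ if $T_1\parallel T_2$; $x{:}T_{11}\to T_{12}\parallel x{:}T_{21}\to T_{22}$ if $T_{11}\parallel T_{21}$ and $T_{12}\parallel T_{22}$; $\forall\alpha.T_1\parallel\forall\alpha.T_2$ if $T_1\parallel T_2$. Conversion: $T_1\Rrightarrow T_2$ if $T_1=T[e_1/x]$, $T_2=T[e_2/x]$ and $e_1\longrightarrow e_2$ for some $T,x,e_1,e_2$; $\equiv$ is the symmetric transitive closure of $\Rrightarrow$. Typing rules: $\Gamma\vdash x:T$ if $\vdash\Gamma$, $x{:}T\in\Gamma$; $\Gamma\vdash k:\mathsf{ty}(k)$ if $\vdash\Gamma$; $\Gamma\vdash\mathtt{op}(e_1,\dots,e_n):T_0[e_1/x_1,\dots,e_n/x_n]$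 if $\vdash\Gamma$, $\mathsf{ty}(\mathtt{op})=x_1{:}T_1\to\dots\to x_n{:}T_n\to T_0$ and $\Gamma\vdash e_i:T_i[e_1/x_1,\dots,e_{i-1}/x_{i-1}]$ for all $i$; $\Gamma\vdash\lambda x{:}T_1.e:x{:}T_1\to T_2$ if $\Gamma,x{:}T_1\vdash e:T_2$; $\Gamma\vdash\langle T_1\Rightarrow T_2\rangle^\ell:T_1\to T_2$ if $\Gamma\vdash T_1$, $\Gamma\vdash T_2$, $T_1\parallel T_2$; $\Gamma\vdash e_1\,e_2:T_2[e_2/x]$ if $\Gamma\vdash e_1:x{:}T_1\to T_2$, $\Gamma\vdash e_2:T_1$, $\Gamma\vdash T_2[e_2/x]$; $\Gamma\vdash\Lambda\alpha.e:\forall\alpha.T$ if $\Gamma,\alpha\vdash e:T$; $\Gamma\vdash e\,T_2:T_1[T_2/\alpha]$ if $\Gamma\vdash e:\forall\alpha.T_1$, $\Gamma\vdash T_2$; $\Gamma\vdash\langle\!\langle\{x{:}T_1\mid e_1\},e_2\rangle\!\rangle^\ell:\{x{:}T_1\mid e_1\}$ if $\Gamma\vdash\{x{:}T_1\mid e_1\}$, $\Gamma\vdash e_2:T_1$; $\Gamma\vdash\langle\{x{:}T_1\mid e_1\},e_2,v\rangle^\ell:\{x{:}T_1\mid e_1\}$ if $\vdash\Gamma$, $\emptyset\vdash\{x{:}T_1\mid e_1\}$, $\emptyset\vdash v:T_1$, $\emptyset\vdash e_2:\mathsf{Bool}$, $e_1[v/x]\longrightarrow^* e_2$; $\Gamma\vdash\Uparrow\ell:T$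 if $\vdash\Gamma$, $\emptyset\vdash T$; $\Gamma\vdash e:T_2$ if $\vdash\Gamma$, $\emptyset\vdash e:T_1$, $\emptyset\vdash T_2$, $T_1\equiv T_2$; $\Gamma\vdash v:T$ if $\vdash\Gamma$, $\emptyset\vdash v:\{x{:}T\mid e\}$; $\Gamma\vdash v:\{x{:}T\mid e\}$ if $\vdash\Gamma$, $\emptyset\vdash v:T$, $\emptyset\vdash\{x{:}T\mid e\}$, $e[v/x]\longrightarrow^*\mathsf{true}$. *)

theory Defs
  imports Main
begin

text \<open>Syntax of F_H, locally in pure de Bruijn style with ONE shared index space for
term variables and type variables.  Every binder (lambda x:T, Lambda alpha, the dependent
arrow x:T1 -> T2 (binding x in T2), forall alpha.T, refinement {x:T | e} (binding x in e))
binds index 0.  'b = base types, 'k = constants, 'o = primitive operations, 'l = blame labels.\<close>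

datatype ('b,'k,'o,'l) ty =
    TBase 'b
  | TVar nat
  | TArr "('b,'k,'o,'l) ty" "('b,'k,'o,'l) ty"     \<comment> \<open>x:T1 -> T2, x bound in T2\<close>
  | TAll "('b,'k,'o,'l) ty"
  | TRef "('b,'k,'o,'l) ty" "('b,'k,'o,'l) tm"      \<comment> \<open>{x:T | e}, x bound in e\<close>
and ('b,'k,'o,'l) tm =
    Var nat
  | Const 'k
  | Op 'o "('b,'k,'o,'l) tm list"
  | Lam "('b,'k,'o,'l) ty" "('b,'k,'o,'l) tm"
  | TLam "('b,'k,'o,'l) tm"
  | Cast "('b,'k,'o,'l) ty" "('b,'k,'o,'l) ty" 'l
  | App "('b,'k,'o,'l) tm" "('b,'k,'o,'l) tm"
  | TApp "('b,'k,'o,'l) tm" "('b,'k,'o,'l) ty"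
  | Wait "('b,'k,'o,'l) ty" "('b,'k,'o,'l) tm" "('b,'k,'o,'l) tm" 'l
      \<comment> \<open>Wait T1 e1 e2 l  =  << {x:T1 | e1}, e2 >>^l\<close>
  | Act "('b,'k,'o,'l) ty" "('b,'k,'o,'l) tm" "('b,'k,'o,'l) tm" "('b,'k,'o,'l) tm" 'l
      \<comment> \<open>Act T1 e1 e2 v l  =  < {x:T1 | e1}, e2, v >^l\<close>
  | Blame 'l

primrec shiftT :: "nat \<Rightarrow> nat \<Rightarrow> ('b,'k,'o,'l) ty \<Rightarrow> ('b,'k,'o,'l) ty"
and shiftE :: "nat \<Rightarrow> nat \<Rightarrow> ('b,'k,'o,'l) tm \<Rightarrow> ('b,'k,'o,'l) tm" where
  "shiftT c d (TBase B) = TBase B"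
| "shiftT c d (TVar n) = TVar (if n < c then n else n + d)"
| "shiftT c d (TArr T1 T2) = TArr (shiftT c d T1) (shiftT (Suc c) d T2)"
| "shiftT c d (TAll T) = TAll (shiftT (Suc c) d T)"
| "shiftT c d (TRef T e) = TRef (shiftT c d T) (shiftE (Suc c) d e)"
| "shiftE c d (Var n) = Var (if n < c then n else n + d)"
| "shiftE c d (Const k) = Const k"
| "shiftE c d (Op p es) = Op p (map (shiftE c d) es)"
| "shiftE c d (Lam T e) = Lam (shiftT c d T) (shiftE (Suc c) d e)"
| "shiftE c d (TLam e) = TLam (shiftE (Suc c) d e)"
| "shiftE c d (Cast T1 T2 l) = Cast (shiftT c d T1) (shiftT c d T2) l"
| "shiftE c d (App e1 e2) = App (shiftE c d e1) (shiftE c d e2)"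
| "shiftE c d (TApp e T) = TApp (shiftE c d e) (shiftT c d T)"
| "shiftE c d (Wait T e1 e2 l) = Wait (shiftT c d T) (shiftE (Suc c) d e1) (shiftE c d e2) l"
| "shiftE c d (Act T e1 e2 v l) =
     Act (shiftT c d T) (shiftE (Suc c) d e1) (shiftE c d e2) (shiftE c d v) l"
| "shiftE c d (Blame l) = Blame l"

text \<open>Capture-avoiding substitution of a term s for (term) variable k; indices above k are
decremented (the binder of k disappears).\<close>
primrec substT :: "nat \<Rightarrow> ('b,'k,'o,'l) tm \<Rightarrow> ('b,'k,'o,'l) ty \<Rightarrow> ('b,'k,'o,'l) ty"
and substE :: "nat \<Rightarrow> ('b,'k,'o,'l) tm \<Rightarrow> ('b,'k,'o,'l) tm \<Rightarrow> ('b,'k,'o,'l) tm" where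
  "substT k s (TBase B) = TBase B"
| "substT k s (TVar n) = TVar (if n \<le> k then n else n - 1)"
| "substT k s (TArr T1 T2) = TArr (substT k s T1) (substT (Suc k) s T2)"
| "substT k s (TAll T) = TAll (substT (Suc k) s T)"
| "substT k s (TRef T e) = TRef (substT k s T) (substE (Suc k) s e)"
| "substE k s (Var n) = (if n < k then Var n else if n = k then shiftE 0 k s else Var (n - 1))"
| "substE k s (Const c) = Const c"
| "substE k s (Op p es) = Op p (map (substE k s) es)"
| "substE k s (Lam T e) = Lam (substT k s T) (substE (Suc k) s e)"
| "substE k s (TLam e) = TLam (substE (Suc k) s e)"
| "substE k s (Cast T1 T2 l) = Cast (substT k s T1) (substT k s T2) l"
| "substE k s (App e1 e2) = App (substE k s e1) (substE k s e2)"
| "substE k s (TApp e T) = TApp (substE k s e) (substT k s T)"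
| "substE k s (Wait T e1 e2 l) = Wait (substT k s T) (substE (Suc k) s e1) (substE k s e2) l"
| "substE k s (Act T e1 e2 v l) =
     Act (substT k s T) (substE (Suc k) s e1) (substE k s e2) (substE k s v) l"
| "substE k s (Blame l) = Blame l"

primrec tsubstT :: "nat \<Rightarrow> ('b,'k,'o,'l) ty \<Rightarrow> ('b,'k,'o,'l) ty \<Rightarrow> ('b,'k,'o,'l) ty"
and tsubstE :: "nat \<Rightarrow> ('b,'k,'o,'l) ty \<Rightarrow> ('b,'k,'o,'l) tm \<Rightarrow> ('b,'k,'o,'l) tm" where
  "tsubstT k S (TBase B) = TBase B"
| "tsubstT k S (TVar n) = (if n < k then TVar n else if n = k then shiftT 0 k S else TVar (n - 1))"
| "tsubstT k S (TArr T1 T2) = TArr (tsubstT k S T1) (tsubstT (Suc k) S T2)"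
| "tsubstT k S (TAll T) = TAll (tsubstT (Suc k) S T)"
| "tsubstT k S (TRef T e) = TRef (tsubstT k S T) (tsubstE (Suc k) S e)"
| "tsubstE k S (Var n) = Var (if n \<le> k then n else n - 1)"
| "tsubstE k S (Const c) = Const c"
| "tsubstE k S (Op p es) = Op p (map (tsubstE k S) es)"
| "tsubstE k S (Lam T e) = Lam (tsubstT k S T) (tsubstE (Suc k) S e)"
| "tsubstE k S (TLam e) = TLam (tsubstE (Suc k) S e)"
| "tsubstE k S (Cast T1 T2 l) = Cast (tsubstT k S T1) (tsubstT k S T2) l"
| "tsubstE k S (App e1 e2) = App (tsubstE k S e1) (tsubstE k S e2)"
| "tsubstE k S (TApp e T) = TApp (tsubstE k S e) (tsubstT k S T)"
| "tsubstE k S (Wait T e1 e2 l) = Wait (tsubstT k S T) (tsubstE (Suc k) S e1) (tsubstE k S e2) l"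
| "tsubstE k S (Act T e1 e2 v l) =
     Act (tsubstT k S T) (tsubstE (Suc k) S e1) (tsubstE k S e2) (tsubstE k S v) l"
| "tsubstE k S (Blame l) = Blame l"

text \<open>Simultaneous substitution T[e1/x1,...,em/xm] for a type T living under the binders
x1,...,xm (x1 outermost, so xi has index m - i).\<close>
fun msubstT :: "('b,'k,'o,'l) tm list \<Rightarrow> ('b,'k,'o,'l) ty \<Rightarrow> ('b,'k,'o,'l) ty" where
  "msubstT [] T = T"
| "msubstT (e # es) T = msubstT es (substT (length es) e T)"

primrec is_value :: "('b,'k,'o,'l) tm \<Rightarrow> bool" where
  "is_value (Var n) = False"
| "is_value (Const k) = True"
| "is_value (Op p es) = False"
| "is_value (Lam T e) = True"
| "is_value (TLam e) = True"
| "is_value (Cast T1 T2 l) = True"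
| "is_value (App e1 e2) = False"
| "is_value (TApp e T) = False"
| "is_value (Wait T e1 e2 l) = False"
| "is_value (Act T e1 e2 v l) = False"
| "is_value (Blame l) = False"

fun is_ref :: "('b,'k,'o,'l) ty \<Rightarrow> bool" where
  "is_ref (TRef T e) = True"
| "is_ref _ = False"

fun unref :: "('b,'k,'o,'l) ty \<Rightarrow> ('b,'k,'o,'l) ty" where
  "unref (TRef T e) = unref T"
| "unref T = T"

text \<open>The language signature: base type of each constant (k : K_B iff cbase k = B),
the base type Bool, the constants true/false, ty(k), the denotation of each primitive
operation (a partial function on tuples of constants), and ty(op) given as the list of
argument types [T1,...,Tn] (Ti living under the binders x1..x_(i-1)) and the result type
T0 (living under x1..xn).\<close>
record ('b,'k,'o,'l) lang =
  cbase :: "'k \<Rightarrow> 'b"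
  boolB :: 'b
  ktrue :: 'k
  kfalse :: 'k
  tyc :: "'k \<Rightarrow> ('b,'k,'o,'l) ty"
  den :: "'o \<Rightarrow> 'k list \<Rightarrow> 'k option"
  tyop :: "'o \<Rightarrow> ('b,'k,'o,'l) ty list \<times> ('b,'k,'o,'l) ty"

inductive red :: "('b,'k,'o,'l) lang \<Rightarrow> ('b,'k,'o,'l) tm \<Rightarrow> ('b,'k,'o,'l) tm \<Rightarrow> bool"
  for L :: "('b,'k,'o,'l) lang" where
  red_op: "den L p ks = Some k \<Longrightarrow> red L (Op p (map Const ks)) (Const k)"
| red_beta: "is_value v \<Longrightarrow> red L (App (Lam T e) v) (substE 0 v e)"
| red_tbeta: "red L (TApp (TLam e) T) (tsubstE 0 T e)"
| red_base: "is_value v \<Longrightarrow> red L (App (Cast (TBase B) (TBase B) l) v) v"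
| red_fun: "is_value v \<Longrightarrow>
    red L (App (Cast (TArr T11 T12) (TArr T21 T22) l) v)
      (Lam T21
        (App (Lam (shiftT 0 1 T11)
                (App (Cast (shiftT 1 1 T12) (shiftT 0 1 T22) l)
                     (App (shiftE 0 2 v) (Var 0))))
             (App (Cast (shiftT 0 1 T21) (shiftT 0 1 T11) l) (Var 0))))"
| red_forall: "is_value v \<Longrightarrow>
    red L (App (Cast (TAll T1) (TAll T2) l) v)
      (TLam (App (Cast T1 T2 l) (TApp (shiftE 0 1 v) (TVar 0))))"
| red_forget: "is_value v \<Longrightarrow>
    red L (App (Cast (TRef T1 e1) T2 l) v) (App (Cast T1 T2 l) v)"
| red_precheck: "is_value v \<Longrightarrow> \<not> is_ref T1 \<Longrightarrow>
    red L (App (Cast T1 (TRef T2 e2) l) v) (Wait T2 e2 (App (Cast T1 T2 l) v) l)"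
| red_check: "is_value v \<Longrightarrow> red L (Wait T e v l) (Act T e (substE 0 v e) v l)"
| red_ok: "red L (Act T e (Const (ktrue L)) v l) v"
| red_fail: "red L (Act T e (Const (kfalse L)) v l) (Blame l)"

datatype ('b,'k,'o,'l) ectx =
    Hole
  | EOp 'o "('b,'k,'o,'l) tm list" "('b,'k,'o,'l) ectx" "('b,'k,'o,'l) tm list"
  | EAppL "('b,'k,'o,'l) ectx" "('b,'k,'o,'l) tm"
  | EAppR "('b,'k,'o,'l) tm" "('b,'k,'o,'l) ectx"
  | ETApp "('b,'k,'o,'l) ectx" "('b,'k,'o,'l) ty"
  | EWait "('b,'k,'o,'l) ty" "('b,'k,'o,'l) tm" "('b,'k,'o,'l) ectx" 'l
  | EAct "('b,'k,'o,'l) ty" "('b,'k,'o,'l) tm" "('b,'k,'o,'l) ectx" "('b,'k,'o,'l) tm" 'l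

primrec plug :: "('b,'k,'o,'l) ectx \<Rightarrow> ('b,'k,'o,'l) tm \<Rightarrow> ('b,'k,'o,'l) tm" where
  "plug Hole e = e"
| "plug (EOp p vs E es) e = Op p (vs @ [plug E e] @ es)"
| "plug (EAppL E e2) e = App (plug E e) e2"
| "plug (EAppR v E) e = App v (plug E e)"
| "plug (ETApp E T) e = TApp (plug E e) T"
| "plug (EWait T e1 E l) e = Wait T e1 (plug E e) l"
| "plug (EAct T e1 E v l) e = Act T e1 (plug E e) v l"

primrec ectx_ok :: "('b,'k,'o,'l) ectx \<Rightarrow> bool" where
  "ectx_ok Hole = True"
| "ectx_ok (EOp p vs E es) = ((\<forall>v\<in>set vs. is_value v) \<and> ectx_ok E)"
| "ectx_ok (EAppL E e2) = ectx_ok E"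
| "ectx_ok (EAppR v E) = (is_value v \<and> ectx_ok E)"
| "ectx_ok (ETApp E T) = ectx_ok E"
| "ectx_ok (EWait T e1 E l) = ectx_ok E"
| "ectx_ok (EAct T e1 E v l) = (is_value v \<and> ectx_ok E)"

inductive step :: "('b,'k,'o,'l) lang \<Rightarrow> ('b,'k,'o,'l) tm \<Rightarrow> ('b,'k,'o,'l) tm \<Rightarrow> bool"
  for L :: "('b,'k,'o,'l) lang" where
  step_red: "ectx_ok E \<Longrightarrow> red L e1 e2 \<Longrightarrow> step L (plug E e1) (plug E e2)"
| step_blame: "ectx_ok E \<Longrightarrow> E \<noteq> Hole \<Longrightarrow> step L (plug E (Blame l)) (Blame l)"

abbreviation steps :: "('b,'k,'o,'l) lang \<Rightarrow> ('b,'k,'o,'l) tm \<Rightarrow> ('b,'k,'o,'l) tm \<Rightarrow> bool" where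
  "steps L \<equiv> (step L)\<^sup>*\<^sup>*"

inductive compat :: "('b,'k,'o,'l) ty \<Rightarrow> ('b,'k,'o,'l) ty \<Rightarrow> bool" where
  "compat (TBase B) (TBase B)"
| "compat (TVar a) (TVar a)"
| "compat T1 T2 \<Longrightarrow> compat (TRef T1 e) T2"
| "compat T1 T2 \<Longrightarrow> compat T1 (TRef T2 e)"
| "compat T11 T21 \<Longrightarrow> compat T12 T22 \<Longrightarrow> compat (TArr T11 T12) (TArr T21 T22)"
| "compat T1 T2 \<Longrightarrow> compat (TAll T1) (TAll T2)"

definition conv1 :: "('b,'k,'o,'l) lang \<Rightarrow> ('b,'k,'o,'l) ty \<Rightarrow> ('b,'k,'o,'l) ty \<Rightarrow> bool" where
  "conv1 L T1 T2 \<longleftrightarrow> (\<exists>T e1 e2. T1 = substT 0 e1 T \<and> T2 = substT 0 e2 T \<and> step L e1 e2)"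

definition tyeq :: "('b,'k,'o,'l) lang \<Rightarrow> ('b,'k,'o,'l) ty \<Rightarrow> ('b,'k,'o,'l) ty \<Rightarrow> bool" where
  "tyeq L = (\<lambda>T1 T2. conv1 L T1 T2 \<or> conv1 L T2 T1)\<^sup>+\<^sup>+"

text \<open>Typing contexts: head of the list = most recently bound variable (index 0).\<close>
datatype ('b,'k,'o,'l) centry = EVar "('b,'k,'o,'l) ty" | ETVar

type_synonym ('b,'k,'o,'l) ctx = "('b,'k,'o,'l) centry list"

inductive wfctx :: "('b,'k,'o,'l) lang \<Rightarrow> ('b,'k,'o,'l) ctx \<Rightarrow> bool"
  and wfty :: "('b,'k,'o,'l) lang \<Rightarrow> ('b,'k,'o,'l) ctx \<Rightarrow> ('b,'k,'o,'l) ty \<Rightarrow> bool"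
  and has_type :: "('b,'k,'o,'l) lang \<Rightarrow> ('b,'k,'o,'l) ctx \<Rightarrow> ('b,'k,'o,'l) tm \<Rightarrow> ('b,'k,'o,'l) ty \<Rightarrow> bool"
  for L :: "('b,'k,'o,'l) lang" where
  wf_empty: "wfctx L []"
| wf_var: "wfctx L \<Gamma> \<Longrightarrow> wfty L \<Gamma> T \<Longrightarrow> wfctx L (EVar T # \<Gamma>)"
| wf_tvar: "wfctx L \<Gamma> \<Longrightarrow> wfctx L (ETVar # \<Gamma>)"
| wft_base: "wfctx L \<Gamma> \<Longrightarrow> wfty L \<Gamma> (TBase B)"
| wft_var: "wfctx L \<Gamma> \<Longrightarrow> a < length \<Gamma> \<Longrightarrow> \<Gamma> ! a = ETVar \<Longrightarrow> wfty L \<Gamma> (TVar a)"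
| wft_arr: "wfty L \<Gamma> T1 \<Longrightarrow> wfty L (EVar T1 # \<Gamma>) T2 \<Longrightarrow> wfty L \<Gamma> (TArr T1 T2)"
| wft_all: "wfty L (ETVar # \<Gamma>) T \<Longrightarrow> wfty L \<Gamma> (TAll T)"
| wft_ref: "wfty L \<Gamma> T \<Longrightarrow> has_type L (EVar T # \<Gamma>) e (TBase (boolB L)) \<Longrightarrow> wfty L \<Gamma> (TRef T e)"
| t_var: "wfctx L \<Gamma> \<Longrightarrow> x < length \<Gamma> \<Longrightarrow> \<Gamma> ! x = EVar T \<Longrightarrow>
    has_type L \<Gamma> (Var x) (shiftT 0 (Suc x) T)"
| t_const: "wfctx L \<Gamma> \<Longrightarrow> has_type L \<Gamma> (Const k) (tyc L k)"
| t_op: "wfctx L \<Gamma> \<Longrightarrow> tyop L p = (Ts, T0) \<Longrightarrow> length es = length Ts \<Longrightarrow>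
    (\<forall>i < length es. has_type L \<Gamma> (es ! i) (msubstT (take i es) (Ts ! i))) \<Longrightarrow>
    has_type L \<Gamma> (Op p es) (msubstT es T0)"
| t_lam: "has_type L (EVar T1 # \<Gamma>) e T2 \<Longrightarrow> has_type L \<Gamma> (Lam T1 e) (TArr T1 T2)"
| t_cast: "wfty L \<Gamma> T1 \<Longrightarrow> wfty L \<Gamma> T2 \<Longrightarrow> compat T1 T2 \<Longrightarrow>
    has_type L \<Gamma> (Cast T1 T2 l) (TArr T1 (shiftT 0 1 T2))"
| t_app: "has_type L \<Gamma> e1 (TArr T1 T2) \<Longrightarrow> has_type L \<Gamma> e2 T1 \<Longrightarrow> wfty L \<Gamma> (substT 0 e2 T2) \<Longrightarrow>
    has_type L \<Gamma> (App e1 e2) (substT 0 e2 T2)"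
| t_tlam: "has_type L (ETVar # \<Gamma>) e T \<Longrightarrow> has_type L \<Gamma> (TLam e) (TAll T)"
| t_tapp: "has_type L \<Gamma> e (TAll T1) \<Longrightarrow> wfty L \<Gamma> T2 \<Longrightarrow> has_type L \<Gamma> (TApp e T2) (tsubstT 0 T2 T1)"
| t_wait: "wfty L \<Gamma> (TRef T1 e1) \<Longrightarrow> has_type L \<Gamma> e2 T1 \<Longrightarrow>
    has_type L \<Gamma> (Wait T1 e1 e2 l) (TRef T1 e1)"
| t_act: "wfctx L \<Gamma> \<Longrightarrow> wfty L [] (TRef T1 e1) \<Longrightarrow> is_value v \<Longrightarrow> has_type L [] v T1 \<Longrightarrow>
    has_type L [] e2 (TBase (boolB L)) \<Longrightarrow> steps L (substE 0 v e1) e2 \<Longrightarrow>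
    has_type L \<Gamma> (Act T1 e1 e2 v l) (TRef T1 e1)"
| t_blame: "wfctx L \<Gamma> \<Longrightarrow> wfty L [] T \<Longrightarrow> has_type L \<Gamma> (Blame l) T"
| t_conv: "wfctx L \<Gamma> \<Longrightarrow> has_type L [] e T1 \<Longrightarrow> wfty L [] T2 \<Longrightarrow> tyeq L T1 T2 \<Longrightarrow> has_type L \<Gamma> e T2"
| t_forget: "wfctx L \<Gamma> \<Longrightarrow> is_value v \<Longrightarrow> has_type L [] v (TRef T e) \<Longrightarrow> has_type L \<Gamma> v T"
| t_exact: "wfctx L \<Gamma> \<Longrightarrow> is_value v \<Longrightarrow> has_type L [] v T \<Longrightarrow> wfty L [] (TRef T e) \<Longrightarrow>
    steps L (substE 0 v e) (Const (ktrue L)) \<Longrightarrow> has_type L \<Gamma> v (TRef T e)"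

definition lang_ok :: "('b,'k,'o,'l) lang \<Rightarrow> bool" where
  "lang_ok L \<longleftrightarrow>
     ktrue L \<noteq> kfalse L \<and>
     (\<forall>k. cbase L k = boolB L \<longleftrightarrow> k = ktrue L \<or> k = kfalse L) \<and>
     (\<forall>k. unref (tyc L k) = TBase (cbase L k) \<and> wfty L [] (tyc L k) \<and>
          (\<forall>l. steps L (App (Cast (TBase (cbase L k)) (tyc L k) l) (Const k)) (Const k))) \<and>
     (\<forall>p Ts T0. tyop L p = (Ts, T0) \<longrightarrow>
        (\<forall>T\<in>set (T0 # Ts). \<exists>B. unref T = TBase B) \<and>
        (\<forall>l ks. length ks = length Ts \<longrightarrow>
           (let ok = (\<lambda>i. unref (Ts ! i) = TBase (cbase L (ks ! i)) \<and>
                       steps L (App (Cast (unref (Ts ! i)) (msubstT (map Const (take i ks)) (Ts ! i)) l)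
                                    (Const (ks ! i))) (Const (ks ! i)))
            in ((\<forall>i < length ks. ok i) \<longrightarrow>
                  (\<exists>k. den L p ks = Some k \<and> unref T0 = TBase (cbase L k) \<and>
                       steps L (App (Cast (unref T0) (msubstT (map Const ks) T0) l) (Const k)) (Const k)))
             \<and> ((\<exists>i < length ks. \<not> ok i) \<longrightarrow> den L p ks = None))))"

end

theory Submission
  imports Defs
begin

text \<open>Progress follows by induction on typing from canonical forms. The one delicate case is a
primitive operation applied to constants: its denotation is defined only if each argument passes
the refinement checks of its declared type, while the typing derivation may reach that type
through conversions \<open>T[e1/x] \<equiv> T[e2/x]\<close> with \<open>e1 \<longrightarrow> e2\<close>. Conversion preserves the
checks by cotermination: if \<open>b\<close> arises from \<open>a\<close> by replacing subterms with their reducts,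
then \<open>a\<close> reduces to a constant iff \<open>b\<close> does. This is shown by a forward and a backward
simulation for a deterministic reduction relation that propagates blame one evaluation frame at
a time; for terms whose active checks carry values, reducing to a value in that relation is
reducing to it in the context-based one.\<close>

lemma shift_zero [simp]:
  fixes T :: "('b,'k,'o,'l) ty" and e :: "('b,'k,'o,'l) tm"
  shows "shiftT c 0 T = T" "shiftE c 0 e = e"
  by (induct T and e arbitrary: c and c rule: ty.induct tm.induct) (auto intro: map_idI)

lemma shift_shift:
  fixes T :: "('b,'k,'o,'l) ty" and e :: "('b,'k,'o,'l) tm"
  shows "c' \<le> c \<Longrightarrow> c \<le> c' + n \<Longrightarrow> shiftT c d (shiftT c' n T) = shiftT c' (n + d) T"
    and "c' \<le> c \<Longrightarrow> c \<le> c' + n \<Longrightarrow> shiftE c d (shiftE c' n e) = shiftE c' (n + d) e"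
  by (induct T and e arbitrary: c c' and c c' rule: ty.induct tm.induct) auto

lemma subst_shift:
  fixes T :: "('b,'k,'o,'l) ty" and e :: "('b,'k,'o,'l) tm"
  shows "c \<le> k \<Longrightarrow> k \<le> c + n \<Longrightarrow> substT k v (shiftT c (Suc n) T) = shiftT c n T"
    and "c \<le> k \<Longrightarrow> k \<le> c + n \<Longrightarrow> substE k v (shiftE c (Suc n) e) = shiftE c n e"
  by (induct T and e arbitrary: c k and c k rule: ty.induct tm.induct) auto

lemma tsubst_shift:
  fixes T :: "('b,'k,'o,'l) ty" and e :: "('b,'k,'o,'l) tm"
  shows "c \<le> k \<Longrightarrow> k \<le> c + n \<Longrightarrow> tsubstT k S (shiftT c (Suc n) T) = shiftT c n T"
    and "c \<le> k \<Longrightarrow> k \<le> c + n \<Longrightarrow> tsubstE k S (shiftE c (Suc n) e) = shiftE c n e"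
  by (induct T and e arbitrary: c k and c k rule: ty.induct tm.induct) auto

lemma is_value_shiftE [simp]: "is_value (shiftE c d e) = is_value e"
  by (cases e) auto

lemma is_value_substE: "is_value v \<Longrightarrow> is_value (substE k s v)"
  and is_value_tsubstE: "is_value v \<Longrightarrow> is_value (tsubstE k S v)"
  by (cases v; simp)+

lemma map_Const_eq_map_Const_iff [simp]: "map Const ks = map Const ks' \<longleftrightarrow> ks = ks'"
  by (simp add: inj_map_eq_map inj_on_def)

section \<open>Structural reduction\<close>

datatype ('b,'k,'o,'l) frame =
    FOp 'o "('b,'k,'o,'l) tm list" "('b,'k,'o,'l) tm list"
  | FAppL "('b,'k,'o,'l) tm"
  | FAppR "('b,'k,'o,'l) tm"
  | FTApp "('b,'k,'o,'l) ty"
  | FWait "('b,'k,'o,'l) ty" "('b,'k,'o,'l) tm" 'l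
  | FAct "('b,'k,'o,'l) ty" "('b,'k,'o,'l) tm" "('b,'k,'o,'l) tm" 'l

fun fill :: "('b,'k,'o,'l) frame \<Rightarrow> ('b,'k,'o,'l) tm \<Rightarrow> ('b,'k,'o,'l) tm" where
  "fill (FOp p vs es) e = Op p (vs @ e # es)"
| "fill (FAppL e2) e = App e e2"
| "fill (FAppR v) e = App v e"
| "fill (FTApp T) e = TApp e T"
| "fill (FWait T p l) e = Wait T p e l"
| "fill (FAct T p v l) e = Act T p e v l"

text \<open>Unlike \<^const>\<open>ectx_ok\<close>, no value is required in the last slot of an active check:
cotermination has to hold for the arbitrary, possibly ill-formed types met along a conversion.\<close>

fun frame_ok :: "('b,'k,'o,'l) frame \<Rightarrow> bool" where
  "frame_ok (FOp p vs es) = (\<forall>v\<in>set vs. is_value v)"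
| "frame_ok (FAppR v) = is_value v"
| "frame_ok _ = True"

inductive cstep :: "('b,'k,'o,'l) lang \<Rightarrow> ('b,'k,'o,'l) tm \<Rightarrow> ('b,'k,'o,'l) tm \<Rightarrow> bool"
  for L :: "('b,'k,'o,'l) lang" where
  cstep_red: "red L e e' \<Longrightarrow> cstep L e e'"
| cstep_fill: "frame_ok F \<Longrightarrow> cstep L e e' \<Longrightarrow> cstep L (fill F e) (fill F e')"
| cstep_blame: "frame_ok F \<Longrightarrow> cstep L (fill F (Blame l)) (Blame l)"

abbreviation csteps :: "('b,'k,'o,'l) lang \<Rightarrow> ('b,'k,'o,'l) tm \<Rightarrow> ('b,'k,'o,'l) tm \<Rightarrow> bool" where
  "csteps L \<equiv> (cstep L)\<^sup>*\<^sup>*"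

lemma red_not_value: "red L v e \<Longrightarrow> \<not> is_value v"
  by (cases rule: red.cases) auto

lemma fill_not_value [simp]: "\<not> is_value (fill F e)"
  by (cases F) auto

lemma fill_neq_Blame [simp]: "fill F e \<noteq> Blame l" "Blame l \<noteq> fill F e"
  by (cases F; auto)+

lemma cstep_not_value: "cstep L v e \<Longrightarrow> \<not> is_value v"
  by (cases rule: cstep.cases) (auto dest: red_not_value)

lemma Blame_cstep_False: "cstep L (Blame l) e \<Longrightarrow> False"
  by (cases rule: cstep.cases) (auto elim: red.cases)

lemma red_fill_value:
  assumes "red L (fill F e) e'"
  shows "is_value e"
proof (cases F)
  case (FOp p vs es)
  with assms obtain ks where "vs @ e # es = map Const ks" by (auto elim: red.cases)
  then have "e \<in> Const ` set ks" by (metis in_set_conv_decomp list.set_map)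
  then show ?thesis by auto
qed (use assms in \<open>auto elim: red.cases\<close>)

lemma append_Cons_eq_values_iff:
  assumes "vs @ e # es = vs' @ e' # es'" "\<forall>v\<in>set vs. is_value v" "\<forall>v\<in>set vs'. is_value v"
    and "\<not> is_value e" "\<not> is_value e'"
  shows "vs = vs' \<and> e = e' \<and> es = es'"
  using assms
proof (induct vs arbitrary: vs')
  case Nil then show ?case by (cases vs') auto
next
  case (Cons a vs) then show ?case by (cases vs') auto
qed

lemma fill_eq_fill:
  assumes "fill F e = fill G e'" "frame_ok F" "frame_ok G" "\<not> is_value e" "\<not> is_value e'"
  shows "F = G \<and> e = e'"
  using assms by (cases F; cases G) (auto dest: append_Cons_eq_values_iff)

lemma lang_ok_ktrue_neq_kfalse: "lang_ok L \<Longrightarrow> ktrue L \<noteq> kfalse L"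
  by (simp add: lang_ok_def)

lemma red_deterministic: "red L e e1 \<Longrightarrow> red L e e2 \<Longrightarrow> lang_ok L \<Longrightarrow> e1 = e2"
  by (drule lang_ok_ktrue_neq_kfalse) (elim red.cases; auto)

lemma red_cstep_deterministic:
  assumes "red L e e1" "cstep L e e2" "lang_ok L"
  shows "e2 = e1"
  using assms(2)
proof cases
  case cstep_red
  then show ?thesis using assms red_deterministic by blast
next
  case (cstep_fill F e' e2')
  then show ?thesis using assms(1) by (metis red_fill_value cstep_not_value)
next
  case (cstep_blame F l)
  then show ?thesis using assms(1) by (metis red_fill_value is_value.simps(11))
qed

lemma cstep_fillE:
  assumes "cstep L (fill F e) e'" "frame_ok F" "\<not> is_value e"
  obtains e'' where "cstep L e e''" "e' = fill F e''" | l where "e = Blame l" "e' = Blame l"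
  using assms(1)
proof cases
  case cstep_red
  then show ?thesis using assms(3) red_fill_value by blast
next
  case (cstep_fill G e0 e0')
  then have "G = F \<and> e0 = e" using fill_eq_fill assms(2,3) cstep_not_value by metis
  then show ?thesis using cstep_fill that(1) by blast
next
  case (cstep_blame G l)
  then have "e = Blame l" using fill_eq_fill[of F e G "Blame l"] assms(2,3) by simp
  then show ?thesis using cstep_blame that(2) by blast
qed

lemma cstep_deterministic: "cstep L e e1 \<Longrightarrow> cstep L e e2 \<Longrightarrow> lang_ok L \<Longrightarrow> e1 = e2"
proof (induct arbitrary: e2 rule: cstep.induct)
  case (cstep_red e e1)
  then show ?case using red_cstep_deterministic by metis
next
  case (cstep_fill F e e1)
  from cstep_fill(4,1) cstep_not_value[OF cstep_fill(2)] show ?case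
  proof (cases rule: cstep_fillE)
    case 1
    then show ?thesis using cstep_fill by simp
  next
    case 2
    then show ?thesis using cstep_fill(2) by (auto dest: Blame_cstep_False)
  qed
next
  case (cstep_blame F l)
  from cstep_blame(2,1) show ?case
    by (cases rule: cstep_fillE) (auto dest: Blame_cstep_False)
qed

lemma csteps_fill: "csteps L e e' \<Longrightarrow> frame_ok F \<Longrightarrow> csteps L (fill F e) (fill F e')"
  by (induct rule: rtranclp_induct) (auto intro: rtranclp.rtrancl_into_rtrancl cstep_fill)

lemma csteps_normal_form: "csteps L e e' \<Longrightarrow> (\<And>e''. \<not> cstep L e e'') \<Longrightarrow> e' = e"
  by (erule converse_rtranclpE) auto

lemma csteps_from_value: "csteps L v e \<Longrightarrow> is_value v \<Longrightarrow> e = v"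
  using csteps_normal_form cstep_not_value by metis

lemma csteps_from_Blame: "csteps L (Blame l) e \<Longrightarrow> e = Blame l"
  using csteps_normal_form Blame_cstep_False by metis

lemma csteps_cstep_cases:
  assumes "cstep L e e1" "csteps L e e2" "lang_ok L"
  shows "e2 = e \<or> csteps L e1 e2"
  using assms(2) by (cases rule: converse_rtranclpE) (use assms cstep_deterministic in blast)+

lemma csteps_normal_form_unique:
  assumes "csteps L e e1" "csteps L e e2" "lang_ok L"
    and "\<And>e'. \<not> cstep L e1 e'" "\<And>e'. \<not> cstep L e2 e'"
  shows "e1 = e2"
  using assms
proof (induct arbitrary: e2 rule: converse_rtranclp_induct)
  case base then show ?case using csteps_normal_form by metis
next
  case (step e e')
  then show ?case using csteps_cstep_cases by blast
qed

section \<open>Cotermination\<close>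

text \<open>\<^term>\<open>simE L n a b\<close> holds if \<open>b\<close> arises from \<open>a\<close> by replacing subterms \<open>X\<close> by reducts \<open>Y\<close>
of \<open>X\<close>, at any depth; \<open>n\<close> counts the binders passed, over which \<open>X\<close> and \<open>Y\<close> are shifted.\<close>

inductive simT :: "('b,'k,'o,'l) lang \<Rightarrow> nat \<Rightarrow> ('b,'k,'o,'l) ty \<Rightarrow> ('b,'k,'o,'l) ty \<Rightarrow> bool"
  and simE :: "('b,'k,'o,'l) lang \<Rightarrow> nat \<Rightarrow> ('b,'k,'o,'l) tm \<Rightarrow> ('b,'k,'o,'l) tm \<Rightarrow> bool"
  for L :: "('b,'k,'o,'l) lang" where
  simT_TBase: "simT L n (TBase B) (TBase B)"
| simT_TVar: "simT L n (TVar a) (TVar a)"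
| simT_TArr: "simT L n T1 T1' \<Longrightarrow> simT L (Suc n) T2 T2' \<Longrightarrow> simT L n (TArr T1 T2) (TArr T1' T2')"
| simT_TAll: "simT L (Suc n) T T' \<Longrightarrow> simT L n (TAll T) (TAll T')"
| simT_TRef: "simT L n T T' \<Longrightarrow> simE L (Suc n) e e' \<Longrightarrow> simT L n (TRef T e) (TRef T' e')"
| simE_Var: "simE L n (Var i) (Var i)"
| simE_Const: "simE L n (Const c) (Const c)"
| simE_Op: "list_all2 (simE L n) es es' \<Longrightarrow> simE L n (Op p es) (Op p es')"
| simE_Lam: "simT L n T T' \<Longrightarrow> simE L (Suc n) e e' \<Longrightarrow> simE L n (Lam T e) (Lam T' e')"
| simE_TLam: "simE L (Suc n) e e' \<Longrightarrow> simE L n (TLam e) (TLam e')"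
| simE_Cast: "simT L n A A' \<Longrightarrow> simT L n B B' \<Longrightarrow> simE L n (Cast A B l) (Cast A' B' l)"
| simE_App: "simE L n a a' \<Longrightarrow> simE L n b b' \<Longrightarrow> simE L n (App a b) (App a' b')"
| simE_TApp: "simE L n a a' \<Longrightarrow> simT L n T T' \<Longrightarrow> simE L n (TApp a T) (TApp a' T')"
| simE_Wait: "simT L n T T' \<Longrightarrow> simE L (Suc n) e e' \<Longrightarrow> simE L n a a' \<Longrightarrow>
    simE L n (Wait T e a l) (Wait T' e' a' l)"
| simE_Act: "simT L n T T' \<Longrightarrow> simE L (Suc n) e e' \<Longrightarrow> simE L n a a' \<Longrightarrow> simE L n v v' \<Longrightarrow>
    simE L n (Act T e a v l) (Act T' e' a' v' l)"
| simE_Blame: "simE L n (Blame l) (Blame l)"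
| simE_csteps: "csteps L X Y \<Longrightarrow> simE L n (shiftE 0 n X) (shiftE 0 n Y)"

lemmas sim_congs = simT_TBase simT_TVar simT_TArr simT_TAll simT_TRef simE_Var simE_Const simE_Op
  simE_Lam simE_TLam simE_Cast simE_App simE_TApp simE_Wait simE_Act simE_Blame

lemma sim_refl:
  fixes T :: "('b,'k,'o,'l) ty" and e :: "('b,'k,'o,'l) tm"
  shows "simT L n T T" "simE L n e e"
  by (induct T and e arbitrary: n and n rule: ty.induct tm.induct)
     (auto intro: sim_congs simp: list_all2_same)

lemma simE_csteps0: "csteps L X Y \<Longrightarrow> simE L 0 X Y"
  using simE_csteps[of L X Y 0] by simp

lemma sim_shift:
  shows "simT L n T T' \<Longrightarrow> c \<le> n \<Longrightarrow> simT L (n + d) (shiftT c d T) (shiftT c d T')"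
    and "simE L n e e' \<Longrightarrow> c \<le> n \<Longrightarrow> simE L (n + d) (shiftE c d e) (shiftE c d e')"
proof (induct arbitrary: c and c rule: simT_simE.inducts)
  case (simE_Op n es es' p)
  have "list_all2 (\<lambda>x y. simE L (n + d) (shiftE c d x) (shiftE c d y)) es es'"
    by (rule list_all2_mono[OF simE_Op(1)]) (use simE_Op(2) in auto)
  then show ?case by (auto intro!: sim_congs simp: list_all2_map1 list_all2_map2)
next
  case (simE_csteps X Y n)
  then show ?case using simT_simE.simE_csteps[OF simE_csteps(1), of "n + d"] by (simp add: shift_shift)
qed (auto intro!: sim_congs)

lemma sim_shift_Suc:
  "simT L n T T' \<Longrightarrow> c \<le> n \<Longrightarrow> simT L (Suc n) (shiftT c (Suc 0) T) (shiftT c (Suc 0) T')"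
  "simE L n e e' \<Longrightarrow> c \<le> n \<Longrightarrow> simE L (Suc n) (shiftE c (Suc 0) e) (shiftE c (Suc 0) e')"
  using sim_shift[where d = 1] by simp_all

lemma simE_shift_2: "simE L n e e' \<Longrightarrow> simE L (Suc (Suc n)) (shiftE 0 2 e) (shiftE 0 2 e')"
  using sim_shift(2)[where c = 0 and d = 2] by (simp add: numeral_2_eq_2)

lemma sim_subst:
  shows "simT L m T T' \<Longrightarrow> m = Suc (n + k) \<Longrightarrow> simE L n v w \<Longrightarrow>
      simT L (n + k) (substT k v T) (substT k w T')"
    and "simE L m e e' \<Longrightarrow> m = Suc (n + k) \<Longrightarrow> simE L n v w \<Longrightarrow>
      simE L (n + k) (substE k v e) (substE k w e')"
proof (induct arbitrary: k and k rule: simT_simE.inducts)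
  case (simE_Op m es es' p)
  have "list_all2 (\<lambda>x y. simE L (n + k) (substE k v x) (substE k w y)) es es'"
    by (rule list_all2_mono[OF simE_Op(1)]) (use simE_Op(2,3) in auto)
  then show ?case by (auto intro!: sim_congs simp: list_all2_map1 list_all2_map2)
next
  case (simE_Var m i)
  then show ?case using sim_shift(2)[of L n v w 0 k] by (auto intro: sim_congs)
next
  case (simE_csteps X Y m)
  then show ?case using simT_simE.simE_csteps[OF simE_csteps(1), of "n + k"] by (simp add: subst_shift)
qed (auto intro!: sim_congs)

lemma sim_tsubst:
  shows "simT L m T T' \<Longrightarrow> m = Suc (n + k) \<Longrightarrow> simT L n S S' \<Longrightarrow>
      simT L (n + k) (tsubstT k S T) (tsubstT k S' T')"
    and "simE L m e e' \<Longrightarrow> m = Suc (n + k) \<Longrightarrow> simT L n S S' \<Longrightarrow>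
      simE L (n + k) (tsubstE k S e) (tsubstE k S' e')"
proof (induct arbitrary: k and k rule: simT_simE.inducts)
  case (simE_Op m es es' p)
  have "list_all2 (\<lambda>x y. simE L (n + k) (tsubstE k S x) (tsubstE k S' y)) es es'"
    by (rule list_all2_mono[OF simE_Op(1)]) (use simE_Op(2,3) in auto)
  then show ?case by (auto intro!: sim_congs simp: list_all2_map1 list_all2_map2)
next
  case (simT_TVar m i)
  then show ?case using sim_shift(1)[of L n S S' 0 k] by (auto intro: sim_congs)
next
  case (simE_csteps X Y m)
  then show ?case using simT_simE.simE_csteps[OF simE_csteps(1), of "n + k"] by (simp add: tsubst_shift)
qed (auto intro!: sim_congs)

lemma simE_subst0:
  assumes "simE L (Suc 0) e e'" "simE L 0 v w"
  shows "simE L 0 (substE 0 v e) (substE 0 w e')"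
  using sim_subst(2)[OF assms(1) _ assms(2), of 0] by simp

lemma simE_tsubst0:
  assumes "simE L (Suc 0) e e'" "simT L 0 S S'"
  shows "simE L 0 (tsubstE 0 S e) (tsubstE 0 S' e')"
  using sim_tsubst(2)[OF assms(1) _ assms(2), of 0] by simp

lemma sim_subst_csteps:
  fixes T :: "('b,'k,'o,'l) ty" and e :: "('b,'k,'o,'l) tm"
  assumes "csteps L e1 e2"
  shows "simT L k (substT k e1 T) (substT k e2 T)" "simE L k (substE k e1 e) (substE k e2 e)"
  by (induct T and e arbitrary: k and k rule: ty.induct tm.induct)
     (auto intro!: simT_simE.intros simE_csteps[OF assms] simp: list_all2_map1 list_all2_map2 list_all2_same)

lemma simE_value_cases [consumes 2, case_names Const Lam TLam Cast]:
  assumes "simE L n u w" "is_value u"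
  obtains k where "u = Const k" "w = Const k"
    | T e T' e' where "u = Lam T e" "w = Lam T' e'" "simT L n T T'" "simE L (Suc n) e e'"
    | e e' where "u = TLam e" "w = TLam e'" "simE L (Suc n) e e'"
    | A B A' B' l where "u = Cast A B l" "w = Cast A' B' l" "simT L n A A'" "simT L n B B'"
  using assms
proof (cases rule: simE.cases)
  case (simE_csteps X Y)
  then have "is_value X" using \<open>is_value u\<close> by simp
  then have "w = u" using simE_csteps by (auto dest: csteps_from_value)
  then show ?thesis using that \<open>is_value u\<close> by (cases u) (auto intro: sim_refl)
qed (auto intro: that)

lemma simE_Blame_left:
  assumes "simE L n (Blame l) w"
  shows "w = Blame l"
  using assms
proof (cases rule: simE.cases)
  case (simE_csteps X Y)
  then have "X = Blame l" by (cases X) auto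
  then show ?thesis using simE_csteps by (auto dest: csteps_from_Blame)
qed auto

lemma simE_value: "simE L n u w \<Longrightarrow> is_value u \<Longrightarrow> is_value w"
  by (erule simE_value_cases) auto

lemma simE_Const_left: "simE L n (Const k) w \<Longrightarrow> w = Const k"
  by (erule simE_value_cases) auto

lemma simE_Const_right: "simE L 0 u (Const k) \<Longrightarrow> csteps L u (Const k)"
  by (erule simE.cases) auto

lemma simE_Blame_right: "simE L 0 u (Blame l) \<Longrightarrow> csteps L u (Blame l)"
  by (erule simE.cases) auto

lemma simE_value_right: "simE L 0 u w \<Longrightarrow> is_value w \<Longrightarrow> \<exists>u'. csteps L u u' \<and> simE L 0 u' w \<and> is_value u'"
  by (erule simE.cases) (auto intro: sim_refl sim_congs)

lemma simT_leftD:
  "simT L n (TBase B) T' \<Longrightarrow> T' = TBase B"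
  "simT L n (TVar a) T' \<Longrightarrow> T' = TVar a"
  "simT L n (TArr T1 T2) T' \<Longrightarrow> \<exists>T1' T2'. T' = TArr T1' T2' \<and> simT L n T1 T1' \<and> simT L (Suc n) T2 T2'"
  "simT L n (TAll T) T' \<Longrightarrow> \<exists>T''. T' = TAll T'' \<and> simT L (Suc n) T T''"
  "simT L n (TRef T e) T' \<Longrightarrow> \<exists>T'' e'. T' = TRef T'' e' \<and> simT L n T T'' \<and> simE L (Suc n) e e'"
  by (erule simT.cases; auto)+

lemma simT_rightD:
  "simT L n T' (TBase B) \<Longrightarrow> T' = TBase B"
  "simT L n T' (TArr T1 T2) \<Longrightarrow> \<exists>T1' T2'. T' = TArr T1' T2' \<and> simT L n T1' T1 \<and> simT L (Suc n) T2' T2"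
  "simT L n T' (TAll T) \<Longrightarrow> \<exists>T''. T' = TAll T'' \<and> simT L (Suc n) T'' T"
  "simT L n T' (TRef T e) \<Longrightarrow> \<exists>T'' e'. T' = TRef T'' e' \<and> simT L n T'' T \<and> simE L (Suc n) e' e"
  by (erule simT.cases; auto)+

lemma simT_is_ref: "simT L n T T' \<Longrightarrow> is_ref T' = is_ref T"
  by (erule simT.cases) auto

lemma list_all2_simE_map_Const: "list_all2 (simE L n) (map Const ks) es \<Longrightarrow> es = map Const ks"
  by (induct ks arbitrary: es) (auto simp: list_all2_Cons1 dest: simE_Const_left)

lemma list_all2_simE_values_right:
  assumes "list_all2 (simE L 0) us ws" "\<forall>w\<in>set ws. is_value w"
  shows "\<exists>us'. list_all2 (csteps L) us us' \<and> list_all2 (simE L 0) us' ws \<and> (\<forall>u\<in>set us'. is_value u)"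
  using assms
proof (induct rule: list_all2_induct)
  case (Cons u us w ws)
  obtain u' where "csteps L u u'" "simE L 0 u' w" "is_value u'"
    using simE_value_right Cons by force
  moreover obtain us' where "list_all2 (csteps L) us us'" "list_all2 (simE L 0) us' ws"
    "\<forall>u\<in>set us'. is_value u"
    using Cons by auto
  ultimately show ?case by (intro exI[of _ "u' # us'"]) auto
qed simp

lemma csteps_Op_args:
  assumes "list_all2 (csteps L) es es'" "\<forall>v\<in>set es'. is_value v" "\<forall>v\<in>set vs. is_value v"
  shows "csteps L (Op p (vs @ es @ rest)) (Op p (vs @ es' @ rest))"
  using assms
proof (induct arbitrary: vs rule: list_all2_induct)
  case (Cons e es e' es')
  have "csteps L (fill (FOp p vs (es @ rest)) e) (fill (FOp p vs (es @ rest)) e')"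
    using Cons by (intro csteps_fill) auto
  moreover have "csteps L (Op p ((vs @ [e']) @ es @ rest)) (Op p ((vs @ [e']) @ es' @ rest))"
    using Cons by (intro Cons(3)) auto
  ultimately show ?case by auto
qed simp

fun sim_frame :: "('b,'k,'o,'l) lang \<Rightarrow> ('b,'k,'o,'l) frame \<Rightarrow> ('b,'k,'o,'l) frame \<Rightarrow> bool" where
  "sim_frame L (FOp p vs es) (FOp p' vs' es') \<longleftrightarrow>
     p = p' \<and> list_all2 (simE L 0) vs vs' \<and> list_all2 (simE L 0) es es'"
| "sim_frame L (FAppL e) (FAppL e') \<longleftrightarrow> simE L 0 e e'"
| "sim_frame L (FAppR v) (FAppR v') \<longleftrightarrow> simE L 0 v v'"
| "sim_frame L (FTApp T) (FTApp T') \<longleftrightarrow> simT L 0 T T'"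
| "sim_frame L (FWait T p l) (FWait T' p' l') \<longleftrightarrow> simT L 0 T T' \<and> simE L 1 p p' \<and> l = l'"
| "sim_frame L (FAct T p v l) (FAct T' p' v' l') \<longleftrightarrow>
     simT L 0 T T' \<and> simE L 1 p p' \<and> simE L 0 v v' \<and> l = l'"
| "sim_frame L _ _ = False"

lemma simE_fill: "sim_frame L F F' \<Longrightarrow> simE L 0 e e' \<Longrightarrow> simE L 0 (fill F e) (fill F' e')"
  by (cases F; cases F') (auto intro!: sim_congs list_all2_appendI)

lemma simE_fill_left:
  assumes "simE L 0 (fill F e) w"
  shows "csteps L (fill F e) w \<or> (\<exists>F' e'. w = fill F' e' \<and> sim_frame L F F' \<and> simE L 0 e e')"
  using assms
proof (cases rule: simE.cases)
  case (simE_Op es es' p)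
  then obtain vs rest where F: "F = FOp p vs rest" by (cases F) auto
  with simE_Op obtain us z zs where "es' = us @ z # zs" "list_all2 (simE L 0) vs us"
    "simE L 0 e z" "list_all2 (simE L 0) rest zs"
    by (auto simp: list_all2_append1 list_all2_Cons1)
  then show ?thesis using F simE_Op by (intro disjI2 exI[of _ "FOp p us zs"]) auto
qed (cases F; auto intro: exI[of _ "FAppL _"] exI[of _ "FAppR _"] exI[of _ "FTApp _"]
    exI[of _ "FWait _ _ _"] exI[of _ "FAct _ _ _ _"])+

lemma simE_fill_right:
  assumes "simE L 0 u (fill F' e')"
  shows "csteps L u (fill F' e') \<or> (\<exists>F e. u = fill F e \<and> sim_frame L F F' \<and> simE L 0 e e')"
  using assms
proof (cases rule: simE.cases)
  case (simE_Op es es' p)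
  then obtain vs' rest' where F': "F' = FOp p vs' rest'" by (cases F') auto
  with simE_Op obtain us z zs where "es = us @ z # zs" "list_all2 (simE L 0) us vs'"
    "simE L 0 z e'" "list_all2 (simE L 0) zs rest'"
    by (auto simp: list_all2_append2 list_all2_Cons2)
  then show ?thesis using F' simE_Op by (intro disjI2 exI[of _ "FOp p us zs"]) auto
qed (cases F'; auto intro: exI[of _ "FAppL _"] exI[of _ "FAppR _"] exI[of _ "FTApp _"]
    exI[of _ "FWait _ _ _"] exI[of _ "FAct _ _ _ _"])+

lemma sim_frame_ok: "sim_frame L F F' \<Longrightarrow> frame_ok F \<Longrightarrow> frame_ok F'"
  by (cases F; cases F') (fastforce simp: list_all2_conv_all_nth in_set_conv_nth intro: simE_value)+

lemma sim_frame_eval: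
  assumes "sim_frame L F F'" "frame_ok F'"
  shows "\<exists>F0. (\<forall>e. csteps L (fill F e) (fill F0 e)) \<and> frame_ok F0 \<and> sim_frame L F0 F'"
proof (cases F)
  case (FOp p vs es)
  with assms obtain vs' es' where F': "F' = FOp p vs' es'" "list_all2 (simE L 0) vs vs'"
    "list_all2 (simE L 0) es es'" "\<forall>v\<in>set vs'. is_value v"
    by (cases F') auto
  then obtain us where "list_all2 (csteps L) vs us" "list_all2 (simE L 0) us vs'"
    "\<forall>u\<in>set us. is_value u"
    using list_all2_simE_values_right by blast
  then show ?thesis using FOp F' csteps_Op_args[where vs = "[]"]
    by (intro exI[of _ "FOp p us es"]) auto
next
  case (FAppR f)
  with assms obtain f' where "F' = FAppR f'" "simE L 0 f f'" "is_value f'"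
    by (cases F') auto
  then obtain f0 where "csteps L f f0" "simE L 0 f0 f'" "is_value f0"
    using simE_value_right by blast
  then show ?thesis using FAppR \<open>F' = FAppR f'\<close> csteps_fill[where F = "FAppL _"]
    by (intro exI[of _ "FAppR f0"]) auto
qed (use assms in \<open>auto intro: exI[of _ F]\<close>)

lemma red_App_values: "red L (App f x) r \<Longrightarrow> is_value f \<and> is_value x"
  by (erule red.cases) auto

lemma red_App_sim_forward:
  assumes "red L (App f x) r" "simE L 0 f f'" "simE L 0 x x'"
  shows "\<exists>r'. red L (App f' x') r'"
proof -
  have "is_value f" "is_value x'" using assms red_App_values simE_value by blast+
  from assms(2) this(1) show ?thesis
  proof (cases rule: simE_value_cases)
    case (Cast A B A' B' l)
    from assms(1)[unfolded Cast] show ?thesis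
    proof cases
      case (red_precheck T2 e2)
      then obtain T'' e' where "B' = TRef T'' e'" using Cast by (auto dest!: simT_leftD)
      moreover have "\<not> is_ref A'" using red_precheck Cast simT_is_ref by metis
      ultimately show ?thesis using Cast \<open>is_value x'\<close> by (auto intro: red.intros)
    qed (use Cast \<open>is_value x'\<close> in \<open>auto dest!: simT_leftD intro: red.intros\<close>)
  qed (use assms(1) \<open>is_value x'\<close> in \<open>auto elim: red.cases intro: red.intros\<close>)
qed

lemma red_App_sim_backward:
  assumes "red L (App f' x') r'" "simE L 0 f f'" "simE L 0 x x'"
  obtains f0 x0 r where "csteps L (App f x) (App f0 x0)" "simE L 0 f0 f'" "simE L 0 x0 x'"
    "red L (App f0 x0) r"
proof -
  have "is_value f'" "is_value x'" using assms(1) red_App_values by auto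
  then obtain f0 x0 where f0: "csteps L f f0" "simE L 0 f0 f'" "is_value f0"
    and x0: "csteps L x x0" "simE L 0 x0 x'" "is_value x0"
    using assms(2,3) simE_value_right by metis
  have "csteps L (App f x) (App f0 x0)"
    using csteps_fill[OF f0(1), of "FAppL x"] csteps_fill[OF x0(1), of "FAppR f0"] f0(3) by simp
  moreover have "\<exists>r. red L (App f0 x0) r"
    using f0(2,3)
  proof (cases rule: simE_value_cases)
    case (Cast A B A' B' l)
    from assms(1)[unfolded Cast] show ?thesis
    proof cases
      case (red_precheck T2 e2)
      then obtain T'' e' where "B = TRef T'' e'" using Cast by (auto dest!: simT_rightD)
      moreover have "\<not> is_ref A" using red_precheck Cast simT_is_ref by metis
      ultimately show ?thesis using Cast x0(3) by (auto intro: red.intros)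
    qed (use Cast x0(3) in \<open>auto dest!: simT_rightD intro: red.intros\<close>)
  qed (use assms(1) x0(3) in \<open>auto elim: red.cases intro: red.intros\<close>)
  ultimately show ?thesis using that f0(2) x0(2) by blast
qed

lemma red_App_sim_compat:
  assumes "red L (App f x) r" "red L (App f' x') r'" "simE L 0 f f'" "simE L 0 x x'"
  shows "simE L 0 r r'"
proof -
  have "is_value f" using assms(1) red_App_values by blast
  with assms(3) show ?thesis
  proof (cases rule: simE_value_cases)
    case (Lam T e T' e')
    then show ?thesis using assms(1,2,4) by (auto elim!: red.cases intro: simE_subst0)
  next
    case (Cast A B A' B' l)
    have "is_ref A' = is_ref A" using Cast by (simp add: simT_is_ref)
    from assms(1)[unfolded Cast] assms(2)[unfolded Cast] show ?thesis
      by (elim red.cases)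
        (use assms(4) Cast \<open>is_ref A' = is_ref A\<close> in
          \<open>auto dest!: simT_leftD intro!: sim_congs sim_shift_Suc simE_shift_2\<close>)
  qed (use assms(1) in \<open>auto elim: red.cases\<close>)
qed

lemma red_sim_forward_exists:
  assumes "red L a a'" "simE L 0 a b"
  shows "csteps L a b \<or> (\<exists>b'. red L b b')"
  using assms(2)
proof (cases rule: simE.cases)
  case (simE_Op es es' p)
  then show ?thesis
    using assms(1) by (auto elim!: red.cases dest!: list_all2_simE_map_Const intro: red.intros)
next
  case (simE_App f f' x x')
  then show ?thesis using assms(1) red_App_sim_forward by blast
next
  case (simE_TApp f f' T T')
  then obtain e where "f = TLam e" using assms(1) by (auto elim: red.cases)
  then obtain e' where "f' = TLam e'" using simE_TApp by (auto elim: simE_value_cases)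
  then show ?thesis using simE_TApp by (auto intro: red.intros)
next
  case (simE_Wait T T' p p' x x' l)
  then show ?thesis
    using assms(1) by (auto elim!: red.cases dest: simE_value intro: red.intros)
next
  case (simE_Act T T' p p' x x' v v' l)
  then show ?thesis
    using assms(1) by (auto elim!: red.cases dest!: simE_Const_left intro: red.intros)
qed (use assms(1) in \<open>auto elim: red.cases\<close>)

lemma list_all2_simE_map_Const_right:
  "list_all2 (simE L 0) es (map Const ks) \<Longrightarrow> list_all2 (csteps L) es (map Const ks)"
  by (induct ks arbitrary: es) (auto simp: list_all2_Cons2 dest: simE_Const_right)

lemma red_sim_backward_exists:
  assumes "red L b b'" "simE L 0 a b"
  shows "\<exists>a0. csteps L a a0 \<and> simE L 0 a0 b \<and> (\<exists>a'. red L a0 a')"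
  using assms(2)
proof (cases rule: simE.cases)
  case (simE_csteps X Y)
  then show ?thesis using assms(1) by (intro exI[of _ b]) (auto intro: sim_refl)
next
  case (simE_Op es es' p)
  from assms(1) obtain ks where "es' = map Const ks" by (auto elim: red.cases simp: simE_Op)
  then have "csteps L a b"
    using simE_Op csteps_Op_args[of L es es' "[]" p "[]"] by (auto dest: list_all2_simE_map_Const_right)
  then show ?thesis using assms(1) by (intro exI[of _ b]) (auto intro: sim_refl)
next
  case (simE_App f f' x x')
  with assms(1) obtain f0 x0 r where "csteps L a (App f0 x0)" "simE L 0 f0 f'" "simE L 0 x0 x'"
    "red L (App f0 x0) r"
    by (auto elim: red_App_sim_backward)
  then show ?thesis using simE_App by (intro exI[of _ "App f0 x0"]) (auto intro: sim_congs)
next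
  case (simE_TApp f f' T T')
  then obtain e' where "f' = TLam e'" using assms(1) by (auto elim: red.cases)
  then obtain f0 where f0: "csteps L f f0" "simE L 0 f0 f'" "is_value f0"
    using simE_TApp simE_value_right by fastforce
  then obtain e where "f0 = TLam e" using \<open>f' = TLam e'\<close> by (auto elim: simE_value_cases)
  then show ?thesis using f0 simE_TApp csteps_fill[OF f0(1), of "FTApp T"]
    by (intro exI[of _ "TApp f0 T"]) (auto intro: sim_congs red.intros)
next
  case (simE_Wait T T' p p' x x' l)
  then have "is_value x'" using assms(1) by (auto elim: red.cases)
  then obtain x0 where x0: "csteps L x x0" "simE L 0 x0 x'" "is_value x0"
    using simE_Wait simE_value_right by metis
  then show ?thesis using simE_Wait csteps_fill[OF x0(1), of "FWait T p l"]
    by (intro exI[of _ "Wait T p x0 l"]) (auto intro: sim_congs red.intros)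
next
  case (simE_Act T T' p p' x x' v v' l)
  then obtain c where c: "x' = Const c" "c = ktrue L \<or> c = kfalse L"
    using assms(1) by (auto elim: red.cases)
  then have "csteps L x x'" using simE_Act simE_Const_right by metis
  then show ?thesis using simE_Act c csteps_fill[of L x x' "FAct T p v l"]
    by (intro exI[of _ "Act T p x' v l"]) (auto intro: sim_congs red.intros)
qed (use assms(1) in \<open>auto elim: red.cases\<close>)

lemma red_sim_compat:
  assumes "red L a a'" "red L b b'" "simE L 0 a b" "lang_ok L"
  shows "simE L 0 a' b'"
  using assms(3)
proof (cases rule: simE.cases)
  case (simE_csteps X Y)
  then have "b = a \<or> csteps L a' b"
    using csteps_cstep_cases[OF cstep_red[OF assms(1)] _ assms(4)] by simp
  then show ?thesis
  proof
    assume "b = a"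
    then show ?thesis using assms red_deterministic by (metis sim_refl(2))
  next
    assume "csteps L a' b"
    then have "csteps L a' b'" using cstep_red[OF assms(2)] by (rule rtranclp.rtrancl_into_rtrancl)
    then show ?thesis by (rule simE_csteps0)
  qed
next
  case (simE_Op es es' p)
  then have "b = a" using assms(1) by (auto elim!: red.cases dest!: list_all2_simE_map_Const)
  then show ?thesis using assms red_deterministic by (metis sim_refl(2))
next
  case (simE_App f f' x x')
  then show ?thesis using assms(1,2) red_App_sim_compat by blast
next
  case (simE_TApp f f' T T')
  then obtain e where "f = TLam e" using assms(1) by (auto elim: red.cases)
  then obtain e' where "f' = TLam e'" "simE L (Suc 0) e e'"
    using simE_TApp by (auto elim: simE_value_cases)
  then show ?thesis using assms(1,2) simE_TApp \<open>f = TLam e\<close> by (auto elim!: red.cases intro: simE_tsubst0)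
next
  case (simE_Wait T T' p p' x x' l)
  then show ?thesis using assms(1,2) by (auto elim!: red.cases intro!: sim_congs simE_subst0)
next
  case (simE_Act T T' p p' x x' v v' l)
  then show ?thesis
    using assms(1,2) lang_ok_ktrue_neq_kfalse[OF assms(4)]
    by (auto elim!: red.cases dest!: simE_Const_left intro: sim_congs)
qed (use assms(1) in \<open>auto elim: red.cases\<close>)

lemma sim_forward_csteps:
  assumes "cstep L a a'" "csteps L a b" "lang_ok L"
  shows "\<exists>b'. csteps L b b' \<and> simE L 0 a' b'"
proof -
  have "b = a \<or> csteps L a' b" using csteps_cstep_cases assms by blast
  then show ?thesis
    using assms(1) by (auto intro: simE_csteps0 sim_refl)
qed

lemma sim_forward:
  assumes "cstep L a a'" "simE L 0 a b" "lang_ok L"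
  shows "\<exists>b'. csteps L b b' \<and> simE L 0 a' b'"
  using assms(1,2)
proof (induct arbitrary: b rule: cstep.induct)
  case (cstep_red a a')
  from red_sim_forward_exists[OF this] show ?case
  proof
    assume "csteps L a b"
    then show ?thesis using sim_forward_csteps cstep.cstep_red[OF cstep_red(1)] assms(3) by blast
  next
    assume "\<exists>b'. red L b b'"
    then obtain b' where "red L b b'" ..
    then show ?thesis using red_sim_compat cstep_red assms(3) by (blast intro: cstep.cstep_red)
  qed
next
  case (cstep_fill F e e')
  from simE_fill_left[OF cstep_fill(4)] show ?case
  proof
    assume "csteps L (fill F e) b"
    then show ?thesis using sim_forward_csteps cstep.cstep_fill[OF cstep_fill(1,2)] assms(3) by blast
  next
    assume "\<exists>F' x. b = fill F' x \<and> sim_frame L F F' \<and> simE L 0 e x"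
    then obtain F' x where b: "b = fill F' x" "sim_frame L F F'" "simE L 0 e x" by blast
    obtain x' where "csteps L x x'" "simE L 0 e' x'" using cstep_fill(3) b(3) by blast
    then show ?thesis
      using b csteps_fill sim_frame_ok[OF b(2) cstep_fill(1)] simE_fill by blast
  qed
next
  case (cstep_blame F l)
  from simE_fill_left[OF cstep_blame(2)] show ?case
  proof
    assume "csteps L (fill F (Blame l)) b"
    then show ?thesis using sim_forward_csteps cstep.cstep_blame[OF cstep_blame(1)] assms(3) by blast
  next
    assume "\<exists>F' x. b = fill F' x \<and> sim_frame L F F' \<and> simE L 0 (Blame l) x"
    then obtain F' where "b = fill F' (Blame l)" "frame_ok F'"
      using sim_frame_ok[OF _ cstep_blame(1)] by (auto dest: simE_Blame_left)
    then show ?thesis by (auto intro: cstep.cstep_blame sim_refl)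
  qed
qed

lemma sim_backward_csteps: "csteps L a b \<Longrightarrow> cstep L b b' \<Longrightarrow> \<exists>a'. csteps L a a' \<and> simE L 0 a' b'"
  by (auto intro: rtranclp.rtrancl_into_rtrancl sim_refl)

lemma sim_backward:
  assumes "cstep L b b'" "simE L 0 a b" "lang_ok L"
  shows "\<exists>a'. csteps L a a' \<and> simE L 0 a' b'"
  using assms(1,2)
proof (induct arbitrary: a rule: cstep.induct)
  case (cstep_red b b')
  obtain a0 a' where "csteps L a a0" "simE L 0 a0 b" "red L a0 a'"
    using red_sim_backward_exists[OF cstep_red] by blast
  then show ?case
    using red_sim_compat cstep_red(1) assms(3) by (blast intro: rtranclp.rtrancl_into_rtrancl cstep.cstep_red)
next
  case (cstep_fill F' e e')
  from simE_fill_right[OF cstep_fill(4)] show ?case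
  proof
    assume "csteps L a (fill F' e)"
    then show ?thesis using sim_backward_csteps cstep.cstep_fill[OF cstep_fill(1,2)] by blast
  next
    assume "\<exists>F x. a = fill F x \<and> sim_frame L F F' \<and> simE L 0 x e"
    then obtain F x where a: "a = fill F x" "sim_frame L F F'" "simE L 0 x e" by blast
    obtain F0 where F0: "csteps L (fill F x) (fill F0 x)" "frame_ok F0" "sim_frame L F0 F'"
      using sim_frame_eval[OF a(2) cstep_fill(1)] by blast
    obtain x' where x': "csteps L x x'" "simE L 0 x' e'" using cstep_fill(3) a(3) by blast
    have "csteps L a (fill F0 x')" using a(1) F0(1) csteps_fill[OF x'(1) F0(2)] by simp
    then show ?thesis using simE_fill[OF F0(3) x'(2)] by blast
  qed
next
  case (cstep_blame F' l)
  from simE_fill_right[OF cstep_blame(2)] show ?case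
  proof
    assume "csteps L a (fill F' (Blame l))"
    then show ?thesis using sim_backward_csteps cstep.cstep_blame[OF cstep_blame(1)] by blast
  next
    assume "\<exists>F x. a = fill F x \<and> sim_frame L F F' \<and> simE L 0 x (Blame l)"
    then obtain F x where a: "a = fill F x" "sim_frame L F F'" "simE L 0 x (Blame l)" by blast
    obtain F0 where F0: "csteps L (fill F x) (fill F0 x)" "frame_ok F0"
      using sim_frame_eval[OF a(2) cstep_blame(1)] by blast
    have "csteps L a (fill F0 (Blame l))"
      using a(1) F0(1) csteps_fill[OF simE_Blame_right[OF a(3)] F0(2)] by simp
    then show ?thesis using sim_backward_csteps cstep.cstep_blame[OF F0(2)] by blast
  qed
qed

lemma csteps_Const_sim_forward:
  "csteps L a (Const k) \<Longrightarrow> simE L 0 a b \<Longrightarrow> lang_ok L \<Longrightarrow> csteps L b (Const k)"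
proof (induct arbitrary: b rule: converse_rtranclp_induct)
  case base then show ?case by (auto dest: simE_Const_left)
next
  case (step a a')
  then show ?case using sim_forward by (meson rtranclp_trans)
qed

lemma csteps_Const_sim_backward:
  "csteps L b (Const k) \<Longrightarrow> simE L 0 a b \<Longrightarrow> lang_ok L \<Longrightarrow> csteps L a (Const k)"
proof (induct arbitrary: a rule: converse_rtranclp_induct)
  case base then show ?case by (auto dest: simE_Const_right)
next
  case (step b b')
  then show ?case using sim_backward by (meson rtranclp_trans)
qed

theorem cotermination:
  "lang_ok L \<Longrightarrow> simE L 0 a b \<Longrightarrow> csteps L a (Const k) \<longleftrightarrow> csteps L b (Const k)"
  using csteps_Const_sim_forward csteps_Const_sim_backward by metis

section \<open>Structural reduction versus evaluation in contexts\<close>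

lemmas cstep_congs =
  cstep_fill[where F = "FOp p vs es" for p vs es, simplified]
  cstep_fill[where F = "FAppL e2" for e2, simplified]
  cstep_fill[where F = "FAppR v" for v, simplified]
  cstep_fill[where F = "FTApp T" for T, simplified]
  cstep_fill[where F = "FWait T p l" for T p l, simplified]
  cstep_fill[where F = "FAct T p v l" for T p v l, simplified]

lemma cstep_plug: "ectx_ok E \<Longrightarrow> cstep L e e' \<Longrightarrow> cstep L (plug E e) (plug E e')"
  by (induct E) (auto intro: cstep_congs)

lemma csteps_fill_Blame: "csteps L e (Blame l) \<Longrightarrow> frame_ok F \<Longrightarrow> csteps L (fill F e) (Blame l)"
  by (metis csteps_fill cstep_blame rtranclp.rtrancl_into_rtrancl)

lemmas csteps_Blame_congs =
  csteps_fill_Blame[where F = "FOp p vs es" for p vs es, simplified]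
  csteps_fill_Blame[where F = "FAppL e2" for e2, simplified]
  csteps_fill_Blame[where F = "FAppR v" for v, simplified]
  csteps_fill_Blame[where F = "FTApp T" for T, simplified]
  csteps_fill_Blame[where F = "FWait T p l" for T p l, simplified]
  csteps_fill_Blame[where F = "FAct T p v l" for T p v l, simplified]

lemma csteps_plug_Blame: "ectx_ok E \<Longrightarrow> csteps L (plug E (Blame l)) (Blame l)"
  by (induct E) (auto intro: csteps_Blame_congs)

lemma step_csteps: "step L e e' \<Longrightarrow> csteps L e e'"
  by (induct rule: step.induct) (auto intro: cstep_plug cstep_red csteps_plug_Blame)

lemma steps_csteps: "steps L e e' \<Longrightarrow> csteps L e e'"
  by (induct rule: rtranclp_induct) (auto dest: step_csteps)

text \<open>The grammar of F_H admits only values in the last slot of an active check; the datatype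
\<^typ>\<open>('b,'k,'o,'l) tm\<close> does not enforce this.\<close>

primrec proper_ty :: "('b,'k,'o,'l) ty \<Rightarrow> bool" and proper_tm :: "('b,'k,'o,'l) tm \<Rightarrow> bool" where
  "proper_ty (TBase B) = True"
| "proper_ty (TVar a) = True"
| "proper_ty (TArr T1 T2) = (proper_ty T1 \<and> proper_ty T2)"
| "proper_ty (TAll T) = proper_ty T"
| "proper_ty (TRef T e) = (proper_ty T \<and> proper_tm e)"
| "proper_tm (Var n) = True"
| "proper_tm (Const k) = True"
| "proper_tm (Op p es) = list_all proper_tm es"
| "proper_tm (Lam T e) = (proper_ty T \<and> proper_tm e)"
| "proper_tm (TLam e) = proper_tm e"
| "proper_tm (Cast T1 T2 l) = (proper_ty T1 \<and> proper_ty T2)"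
| "proper_tm (App e1 e2) = (proper_tm e1 \<and> proper_tm e2)"
| "proper_tm (TApp e T) = (proper_tm e \<and> proper_ty T)"
| "proper_tm (Wait T e1 e2 l) = (proper_ty T \<and> proper_tm e1 \<and> proper_tm e2)"
| "proper_tm (Act T e1 e2 v l) = (proper_ty T \<and> proper_tm e1 \<and> proper_tm e2 \<and> proper_tm v \<and> is_value v)"
| "proper_tm (Blame l) = True"

lemma proper_shift:
  fixes T :: "('b,'k,'o,'l) ty" and e :: "('b,'k,'o,'l) tm"
  shows "proper_ty T \<Longrightarrow> proper_ty (shiftT c d T)" "proper_tm e \<Longrightarrow> proper_tm (shiftE c d e)"
  by (induct T and e arbitrary: c and c rule: ty.induct tm.induct) (auto simp: list_all_iff)

lemma proper_subst:
  fixes T :: "('b,'k,'o,'l) ty" and e :: "('b,'k,'o,'l) tm"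
  assumes "proper_tm s"
  shows "proper_ty T \<Longrightarrow> proper_ty (substT k s T)" "proper_tm e \<Longrightarrow> proper_tm (substE k s e)"
  by (induct T and e arbitrary: k and k rule: ty.induct tm.induct)
     (auto simp: list_all_iff proper_shift assms is_value_substE)

lemma proper_tsubst:
  fixes T :: "('b,'k,'o,'l) ty" and e :: "('b,'k,'o,'l) tm"
  assumes "proper_ty S"
  shows "proper_ty T \<Longrightarrow> proper_ty (tsubstT k S T)" "proper_tm e \<Longrightarrow> proper_tm (tsubstE k S e)"
  by (induct T and e arbitrary: k and k rule: ty.induct tm.induct)
     (auto simp: list_all_iff proper_shift assms is_value_tsubstE)

lemma proper_fill:
  "proper_tm (fill F e) \<Longrightarrow> proper_tm e"
  "proper_tm (fill F e) \<Longrightarrow> proper_tm e' \<Longrightarrow> proper_tm (fill F e')"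
  by (cases F; auto)+

lemma cstep_proper: "cstep L e e' \<Longrightarrow> proper_tm e \<Longrightarrow> proper_tm e'"
  by (induct rule: cstep.induct)
     (auto elim!: red.cases simp: proper_shift proper_subst proper_tsubst dest: proper_fill)

fun frame_ectx :: "('b,'k,'o,'l) frame \<Rightarrow> ('b,'k,'o,'l) ectx \<Rightarrow> ('b,'k,'o,'l) ectx" where
  "frame_ectx (FOp p vs es) E = EOp p vs E es"
| "frame_ectx (FAppL e2) E = EAppL E e2"
| "frame_ectx (FAppR v) E = EAppR v E"
| "frame_ectx (FTApp T) E = ETApp E T"
| "frame_ectx (FWait T p l) E = EWait T p E l"
| "frame_ectx (FAct T p v l) E = EAct T p E v l"

lemma plug_frame_ectx [simp]: "plug (frame_ectx F E) e = fill F (plug E e)"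
  by (cases F) auto

lemma ectx_ok_frame_ectx:
  "frame_ok F \<Longrightarrow> proper_tm (fill F e) \<Longrightarrow> ectx_ok E \<Longrightarrow> ectx_ok (frame_ectx F E)"
  by (cases F) auto

lemma cstep_proper_cases:
  assumes "cstep L e e'" "proper_tm e"
  shows "(\<exists>E r r'. ectx_ok E \<and> red L r r' \<and> e = plug E r \<and> e' = plug E r')
    \<or> (\<exists>E l. ectx_ok E \<and> e' = plug E (Blame l))"
  using assms
proof (induct rule: cstep.induct)
  case (cstep_red e e')
  then show ?case by (intro disjI1 exI[of _ Hole]) auto
next
  case (cstep_fill F e e')
  then have "proper_tm e" by (blast dest: proper_fill)
  from cstep_fill(3)[OF this] show ?case
  proof (elim disjE exE conjE)
    fix E r r' assume "ectx_ok E" "red L r r'" "e = plug E r" "e' = plug E r'"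
    then show ?thesis using cstep_fill ectx_ok_frame_ectx
      by (intro disjI1 exI[of _ "frame_ectx F E"]) auto
  next
    fix E l assume "ectx_ok E" "e' = plug E (Blame l)"
    then show ?thesis using cstep_fill ectx_ok_frame_ectx
      by (intro disjI2 exI[of _ "frame_ectx F E"]) auto
  qed
next
  case (cstep_blame F l)
  then show ?case by (intro disjI2 exI[of _ Hole]) auto
qed

lemma csteps_value_steps:
  "csteps L e v \<Longrightarrow> proper_tm e \<Longrightarrow> is_value v \<Longrightarrow> lang_ok L \<Longrightarrow> steps L e v"
proof (induct rule: converse_rtranclp_induct)
  case (step e e')
  from cstep_proper_cases[OF step(1,4)] show ?case
  proof (elim disjE exE conjE)
    fix E r r' assume "ectx_ok E" "red L r r'" "e = plug E r" "e' = plug E r'"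
    then have "step L e e'" by (auto intro: step_red)
    then show ?thesis using step cstep_proper by (meson converse_rtranclp_into_rtranclp)
  next
    fix E l assume "ectx_ok E" "e' = plug E (Blame l)"
    then have "csteps L e' (Blame l)" by (simp add: csteps_plug_Blame)
    then have "v = Blame l"
      using csteps_normal_form_unique[OF step(2)] step(5,6) cstep_not_value Blame_cstep_False
      by metis
    then show ?thesis using step(5) by simp
  qed
qed simp

section \<open>Refinement checks of constants\<close>

fun passes_checks :: "('b,'k,'o,'l) lang \<Rightarrow> 'k \<Rightarrow> ('b,'k,'o,'l) ty \<Rightarrow> bool" where
  "passes_checks L k (TBase B) = True"
| "passes_checks L k (TRef T p) \<longleftrightarrow>
     passes_checks L k T \<and> csteps L (substE 0 (Const k) p) (Const (ktrue L))"
| "passes_checks L k _ = False"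

lemma passes_checks_sim:
  "simT L 0 T T' \<Longrightarrow> lang_ok L \<Longrightarrow> passes_checks L k T = passes_checks L k T'"
proof (induct L k T arbitrary: T' rule: passes_checks.induct)
  case (2 L k T p)
  then obtain T'' p' where T': "T' = TRef T'' p'" "simT L 0 T T''" "simE L (Suc 0) p p'"
    by (auto dest: simT_leftD)
  have "simE L 0 (substE 0 (Const k) p) (substE 0 (Const k) p')"
    using T'(3) by (rule simE_subst0) (rule simE_Const)
  then show ?case using 2 T' cotermination[OF \<open>lang_ok L\<close>] by simp
qed (auto dest: simT_leftD)

lemma conv1_simT: "conv1 L T1 T2 \<Longrightarrow> simT L 0 T1 T2"
  unfolding conv1_def by (auto intro: sim_subst_csteps step_csteps)

lemma tyeq_passes_checks: "tyeq L T1 T2 \<Longrightarrow> lang_ok L \<Longrightarrow> passes_checks L k T1 = passes_checks L k T2"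
  unfolding tyeq_def
  by (induct rule: tranclp_induct) (auto dest!: conv1_simT dest: passes_checks_sim)

lemma App_eq_fill_iff: "App f x = fill F e \<longleftrightarrow> F = FAppL x \<and> e = f \<or> F = FAppR f \<and> e = x"
  by (cases F) auto

lemma Wait_eq_fill_iff: "Wait T p e l = fill F e' \<longleftrightarrow> F = FWait T p l \<and> e' = e"
  by (cases F) auto

lemma Act_eq_fill_iff: "Act T p e v l = fill F e' \<longleftrightarrow> F = FAct T p v l \<and> e' = e"
  by (cases F) auto

lemma cstep_WaitE:
  assumes "cstep L (Wait T p e l) e'"
  obtains "is_value e" "e' = Act T p (substE 0 e p) e l"
    | e'' where "cstep L e e''" "e' = Wait T p e'' l"
    | l' where "e = Blame l'" "e' = Blame l'"
  using assms by (cases rule: cstep.cases) (auto elim!: red.cases simp: Wait_eq_fill_iff intro: that)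

lemma cstep_ActE:
  assumes "cstep L (Act T p e v l) e'"
  obtains "e = Const (ktrue L)" "e' = v"
    | "e = Const (kfalse L)" "e' = Blame l"
    | e'' where "cstep L e e''" "e' = Act T p e'' v l"
    | l' where "e = Blame l'" "e' = Blame l'"
  using assms by (cases rule: cstep.cases) (auto elim!: red.cases simp: Act_eq_fill_iff intro: that)

lemma Wait_csteps_value:
  assumes "csteps L (Wait T p e l) v" "is_value v"
  shows "\<exists>u. is_value u \<and> csteps L e u \<and> csteps L (Act T p (substE 0 u p) u l) v"
proof -
  have "w = Wait T p e l \<Longrightarrow> ?thesis" if "csteps L w v" for w
    using that
  proof (induct arbitrary: e rule: converse_rtranclp_induct)
    case (step w w')
    from step(1)[unfolded step(4)] show ?case
    proof (cases rule: cstep_WaitE)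
      case (2 e'')
      then show ?thesis using step(3)[of e''] by (auto intro: converse_rtranclp_into_rtranclp)
    qed (use step(2) assms(2) in \<open>auto dest: csteps_from_Blame\<close>)
  qed (use assms(2) in simp)
  then show ?thesis using assms(1) by blast
qed

lemma Act_csteps_value:
  assumes "csteps L (Act T p e u l) v" "is_value v" "is_value u"
  shows "csteps L e (Const (ktrue L)) \<and> v = u"
proof -
  have "w = Act T p e u l \<Longrightarrow> ?thesis" if "csteps L w v" for w
    using that
  proof (induct arbitrary: e rule: converse_rtranclp_induct)
    case (step w w')
    from step(1)[unfolded step(4)] show ?case
    proof (cases rule: cstep_ActE)
      case (3 e'')
      then show ?thesis using step(3)[of e''] by (auto intro: converse_rtranclp_into_rtranclp)
    qed (use step(2) assms(2,3) in \<open>auto dest: csteps_from_Blame csteps_from_value\<close>)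
  qed (use assms(2) in simp)
  then show ?thesis using assms(1) by blast
qed

lemma cstep_precheck_Const:
  assumes "cstep L (App (Cast (TBase B) (TRef T p) l) (Const k)) e'"
  shows "e' = Wait T p (App (Cast (TBase B) T l) (Const k)) l"
  using assms
  by (cases rule: cstep.cases) (auto elim!: red.cases simp: App_eq_fill_iff dest: cstep_not_value)

lemma cast_Const_csteps_iff:
  "unref T = TBase B \<Longrightarrow>
    csteps L (App (Cast (TBase B) T l) (Const k)) (Const k) \<longleftrightarrow> passes_checks L k T"
proof (induct T rule: unref.induct)
  case (1 T p)
  let ?check = "App (Cast (TBase B) T l) (Const k)"
  have first: "cstep L (App (Cast (TBase B) (TRef T p) l) (Const k)) (Wait T p ?check l)"
    by (rule cstep_red, rule red_precheck) auto
  show ?case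
  proof
    assume "csteps L (App (Cast (TBase B) (TRef T p) l) (Const k)) (Const k)"
    then have "csteps L (Wait T p ?check l) (Const k)"
      by (cases rule: converse_rtranclpE) (auto dest: cstep_precheck_Const)
    then obtain u where "is_value u" "csteps L ?check u" "csteps L (Act T p (substE 0 u p) u l) (Const k)"
      using Wait_csteps_value by fastforce
    then show "passes_checks L k (TRef T p)" using 1 Act_csteps_value[of L T p _ u l "Const k"] by auto
  next
    assume "passes_checks L k (TRef T p)"
    then have check: "csteps L ?check (Const k)"
      and pred: "csteps L (substE 0 (Const k) p) (Const (ktrue L))"
      using 1 by auto
    have "csteps L (App (Cast (TBase B) (TRef T p) l) (Const k)) (Wait T p ?check l)"
      using first by (rule r_into_rtranclp)
    also have "csteps L \<dots> (Wait T p (Const k) l)"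
      using csteps_fill[OF check, of "FWait T p l"] by simp
    also have "csteps L \<dots> (Act T p (substE 0 (Const k) p) (Const k) l)"
      by (rule r_into_rtranclp, rule cstep_red, rule red_check) simp
    also have "csteps L \<dots> (Act T p (Const (ktrue L)) (Const k) l)"
      using csteps_fill[OF pred, of "FAct T p (Const k) l"] by simp
    also have "csteps L \<dots> (Const k)"
      by (rule r_into_rtranclp, rule cstep_red, rule red_ok)
    finally show "csteps L (App (Cast (TBase B) (TRef T p) l) (Const k)) (Const k)" .
  qed
next
  case ("2_1" B')
  have "cstep L (App (Cast (TBase B) (TBase B) l) (Const k)) (Const k)"
    by (rule cstep_red, rule red_base) simp
  then show ?case using "2_1" by auto
qed auto

lemma lang_ok_Const:
  assumes "lang_ok L"
  shows "unref (tyc L k) = TBase (cbase L k)" "wfty L [] (tyc L k)"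
    "steps L (App (Cast (TBase (cbase L k)) (tyc L k) l) (Const k)) (Const k)"
  using assms by (simp_all add: lang_ok_def)

definition proper_ctx :: "('b,'k,'o,'l) ctx \<Rightarrow> bool" where
  "proper_ctx \<Gamma> \<longleftrightarrow> (\<forall>T. EVar T \<in> set \<Gamma> \<longrightarrow> proper_ty T)"

lemma typing_proper:
  shows "wfctx L \<Gamma> \<Longrightarrow> proper_ctx \<Gamma>"
    and "wfty L \<Gamma> T \<Longrightarrow> proper_ty T \<and> proper_ctx \<Gamma>"
    and "has_type L \<Gamma> e T \<Longrightarrow> proper_tm e \<and> proper_ctx \<Gamma>"
  by (induct rule: wfctx_wfty_has_type.inducts)
     (auto simp: proper_ctx_def list_all_iff in_set_conv_nth)

lemmas has_type_induct =
  wfctx_wfty_has_type.inducts(3)[where ?P1.0 = "\<lambda>_. True" and ?P2.0 = "\<lambda>_ _. True",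
    consumes 1, case_names wf_empty wf_var wf_tvar wft_base wft_var wft_arr wft_all wft_ref
    t_var t_const t_op t_lam t_cast t_app t_tlam t_tapp t_wait t_act t_blame t_conv t_forget t_exact]

datatype 'b shape = ShBase 'b | ShVar | ShArr | ShAll

fun ty_shape :: "('b,'k,'o,'l) ty \<Rightarrow> 'b shape" where
  "ty_shape (TBase B) = ShBase B"
| "ty_shape (TVar a) = ShVar"
| "ty_shape (TArr T1 T2) = ShArr"
| "ty_shape (TAll T) = ShAll"
| "ty_shape (TRef T e) = ty_shape T"

lemma unref_eq_TBase_iff: "unref T = TBase B \<longleftrightarrow> ty_shape T = ShBase B"
  by (induct T rule: unref.induct) auto

lemma ty_shape_substT [simp]: "ty_shape (substT k s T) = ty_shape T"
  by (induct T arbitrary: k rule: ty_shape.induct) auto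

lemma ty_shape_msubstT [simp]: "ty_shape (msubstT es T) = ty_shape T"
  by (induct es T rule: msubstT.induct) auto

lemma simT_ty_shape: "simT L n T T' \<Longrightarrow> ty_shape T' = ty_shape T"
  by (induct T arbitrary: n T' rule: ty_shape.induct) (auto dest!: simT_leftD)

lemma tyeq_ty_shape: "tyeq L T1 T2 \<Longrightarrow> ty_shape T2 = ty_shape T1"
  unfolding tyeq_def
  by (induct rule: tranclp_induct) (auto dest!: conv1_simT dest: simT_ty_shape)

lemma has_type_value_shape:
  "has_type L \<Gamma> v T \<Longrightarrow> lang_ok L \<Longrightarrow>
    (case v of Const k \<Rightarrow> ty_shape T = ShBase (cbase L k)
      | Lam T' e \<Rightarrow> ty_shape T = ShArr | Cast A B l \<Rightarrow> ty_shape T = ShArr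
      | TLam e \<Rightarrow> ty_shape T = ShAll | _ \<Rightarrow> True)"
proof (induct rule: has_type_induct)
  case (t_const \<Gamma> k)
  then show ?case using lang_ok_Const(1) by (simp add: unref_eq_TBase_iff)
next
  case (t_conv \<Gamma> e T1 T2)
  then show ?case using tyeq_ty_shape[OF \<open>tyeq L T1 T2\<close>] by (auto split: tm.split)
qed (auto split: tm.split)

lemma canonical_forms:
  assumes "has_type L \<Gamma> v T" "is_value v" "lang_ok L"
  shows "ty_shape T = ShBase B \<Longrightarrow> \<exists>k. v = Const k \<and> cbase L k = B"
    and "ty_shape T = ShArr \<Longrightarrow> (\<exists>T' e. v = Lam T' e) \<or> (\<exists>A B l. v = Cast A B l)"
    and "ty_shape T = ShAll \<Longrightarrow> \<exists>e. v = TLam e"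
  using has_type_value_shape[OF assms(1,3)] assms(2) by (cases v; auto)+

lemma has_type_Const_passes_checks:
  "has_type L \<Gamma> e T \<Longrightarrow> lang_ok L \<Longrightarrow> e = Const k \<Longrightarrow> passes_checks L k T \<and> proper_ty T"
proof (induct rule: has_type_induct)
  case (t_const \<Gamma> k')
  note ok = lang_ok_Const[OF \<open>lang_ok L\<close>, of k]
  have "passes_checks L k (tyc L k)"
    using cast_Const_csteps_iff[OF ok(1)] steps_csteps[OF ok(3)] by simp
  then show ?case using t_const typing_proper(2)[OF ok(2)] by simp
next
  case (t_conv \<Gamma> e T1 T2)
  then show ?case using tyeq_passes_checks[OF \<open>tyeq L T1 T2\<close> \<open>lang_ok L\<close>]
    typing_proper(2)[OF \<open>wfty L [] T2\<close>] by simp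
next
  case (t_exact \<Gamma> v T e)
  then show ?case using steps_csteps typing_proper(2)[OF \<open>wfty L [] (TRef T e)\<close>] by simp
qed simp_all

section \<open>Progress\<close>

lemma lang_ok_tyop_args:
  assumes "lang_ok L" "tyop L p = (Ts, T0)" "T \<in> set Ts"
  shows "\<exists>B. unref T = TBase B"
  using assms unfolding lang_ok_def by auto

lemma lang_ok_den_defined:
  assumes "lang_ok L" "tyop L p = (Ts, T0)" "length ks = length Ts"
    and "\<forall>i<length ks. unref (Ts ! i) = TBase (cbase L (ks ! i)) \<and>
      steps L (App (Cast (unref (Ts ! i)) (msubstT (map Const (take i ks)) (Ts ! i)) l) (Const (ks ! i)))
        (Const (ks ! i))"
  shows "\<exists>k. den L p ks = Some k"
proof -
  have "\<forall>l ks. length ks = length Ts \<longrightarrow>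
      (\<forall>i<length ks. unref (Ts ! i) = TBase (cbase L (ks ! i)) \<and>
        steps L (App (Cast (unref (Ts ! i)) (msubstT (map Const (take i ks)) (Ts ! i)) l) (Const (ks ! i)))
          (Const (ks ! i))) \<longrightarrow> (\<exists>k. den L p ks = Some k)"
    using assms(1,2) unfolding lang_ok_def Let_def by blast
  then show ?thesis using assms(3,4) by blast
qed

lemma Const_arg_passes_check:
  assumes "has_type L [] (Const k) (msubstT es T)" "unref T = TBase B" "lang_ok L"
  shows "unref T = TBase (cbase L k) \<and>
    steps L (App (Cast (unref T) (msubstT es T) l) (Const k)) (Const k)"
proof -
  have "ty_shape (msubstT es T) = ShBase (cbase L k)"
    using has_type_value_shape[OF assms(1,3)] by simp
  then have base: "unref T = TBase (cbase L k)" "unref (msubstT es T) = TBase (cbase L k)"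
    using assms(2) by (simp_all add: unref_eq_TBase_iff)
  have "passes_checks L k (msubstT es T)" "proper_ty (msubstT es T)"
    using has_type_Const_passes_checks[OF assms(1,3) refl] by simp_all
  then have "csteps L (App (Cast (unref T) (msubstT es T) l) (Const k)) (Const k)"
    using cast_Const_csteps_iff[OF base(2)] base(1) by simp
  then show ?thesis
    using csteps_value_steps \<open>proper_ty (msubstT es T)\<close> base(1) assms(3) by fastforce
qed

lemma progress_Op_values:
  assumes "lang_ok L" "tyop L p = (Ts, T0)" "length es = length Ts"
    and "\<forall>i<length es. has_type L [] (es ! i) (msubstT (take i es) (Ts ! i))"
    and "\<forall>e\<in>set es. is_value e"
  shows "\<exists>e'. red L (Op p es) e'"
proof -
  have base: "\<exists>B. unref (Ts ! i) = TBase B" if "i < length es" for i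
    using lang_ok_tyop_args[OF assms(1,2) nth_mem] that assms(3) by simp
  have "\<exists>k. e = Const k" if "e \<in> set es" for e
  proof -
    obtain i where i: "i < length es" "e = es ! i" using \<open>e \<in> set es\<close> by (auto simp: in_set_conv_nth)
    then obtain B where "ty_shape (msubstT (take i es) (Ts ! i)) = ShBase B"
      using base by (auto simp: unref_eq_TBase_iff)
    moreover have "has_type L [] e (msubstT (take i es) (Ts ! i))" "is_value e"
      using assms(4,5) i \<open>e \<in> set es\<close> by auto
    ultimately show ?thesis using canonical_forms(1)[OF _ _ assms(1)] by blast
  qed
  then have "\<exists>ks. es = map Const ks" by (simp add: ex_map_conv)
  then obtain ks where es: "es = map Const ks" ..
  have args: "unref (Ts ! i) = TBase (cbase L (ks ! i)) \<and>
      steps L (App (Cast (unref (Ts ! i)) (msubstT (map Const (take i ks)) (Ts ! i)) undefined)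
        (Const (ks ! i))) (Const (ks ! i))"
    if i: "i < length ks" for i
  proof -
    obtain B where "unref (Ts ! i) = TBase B" using base i es by auto
    moreover have "has_type L [] (Const (ks ! i)) (msubstT (map Const (take i ks)) (Ts ! i))"
      using assms(4) i es by (simp add: take_map)
    ultimately show ?thesis using Const_arg_passes_check[OF _ _ assms(1)] by blast
  qed
  moreover have "length ks = length Ts" using assms(3) es by simp
  ultimately obtain k where "den L p ks = Some k"
    using lang_ok_den_defined[OF assms(1,2)] by blast
  then show ?thesis using es by (auto intro: red_op)
qed

fun ectx_comp :: "('b,'k,'o,'l) ectx \<Rightarrow> ('b,'k,'o,'l) ectx \<Rightarrow> ('b,'k,'o,'l) ectx" where
  "ectx_comp Hole E' = E'"
| "ectx_comp (EOp p vs E es) E' = EOp p vs (ectx_comp E E') es"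
| "ectx_comp (EAppL E e2) E' = EAppL (ectx_comp E E') e2"
| "ectx_comp (EAppR v E) E' = EAppR v (ectx_comp E E')"
| "ectx_comp (ETApp E T) E' = ETApp (ectx_comp E E') T"
| "ectx_comp (EWait T e1 E l) E' = EWait T e1 (ectx_comp E E') l"
| "ectx_comp (EAct T e1 E v l) E' = EAct T e1 (ectx_comp E E') v l"

lemma plug_ectx_comp [simp]: "plug (ectx_comp E E') e = plug E (plug E' e)"
  and ectx_ok_ectx_comp [simp]: "ectx_ok (ectx_comp E E') \<longleftrightarrow> ectx_ok E \<and> ectx_ok E'"
  and ectx_comp_eq_Hole_iff [simp]: "ectx_comp E E' = Hole \<longleftrightarrow> E = Hole \<and> E' = Hole"
  by (induct E) auto

lemma step_plug:
  assumes "step L e e'" "ectx_ok E"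
  shows "\<exists>e''. step L (plug E e) e''"
  using assms(1)
proof (cases rule: step.cases)
  case (step_red E' r r')
  have "step L (plug (ectx_comp E E') r) (plug (ectx_comp E E') r')"
    using step_red assms(2) by (intro step.step_red) simp_all
  then show ?thesis using step_red by auto
next
  case (step_blame E' l)
  have "step L (plug (ectx_comp E E') (Blame l)) (Blame l)"
    using step_blame assms(2) by (intro step.step_blame) simp_all
  then show ?thesis using step_blame by auto
qed

lemma progress_in_ectx:
  assumes "ectx_ok E" "E \<noteq> Hole" "\<not> is_value e"
    and "(\<exists>e'. step L e e') \<or> is_value e \<or> (\<exists>l. e = Blame l)"
  shows "\<exists>e'. step L (plug E e) e'"
  using assms(4)
proof (elim disjE)
  assume "\<exists>e'. step L e e'"
  then show ?thesis using step_plug assms(1) by blast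
next
  assume "\<exists>l. e = Blame l"
  then show ?thesis using step_blame[OF assms(1,2)] by blast
qed (use assms(3) in simp)

lemma red_step: "red L e e' \<Longrightarrow> step L e e'"
  using step_red[of Hole] by simp

lemma progress_Op:
  assumes "lang_ok L" "tyop L p = (Ts, T0)" "length es = length Ts"
    and "\<forall>i<length es. has_type L [] (es ! i) (msubstT (take i es) (Ts ! i)) \<and>
      ((\<exists>e'. step L (es ! i) e') \<or> is_value (es ! i) \<or> (\<exists>l. es ! i = Blame l))"
  shows "\<exists>e'. step L (Op p es) e'"
proof (cases "\<forall>e\<in>set es. is_value e")
  case True
  then show ?thesis using progress_Op_values[OF assms(1-3)] assms(4) red_step by blast
next
  case False
  then obtain i where i: "i < length es" "\<not> is_value (es ! i)" "\<forall>j<i. is_value (es ! j)"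
    using exists_least_iff[of "\<lambda>i. i < length es \<and> \<not> is_value (es ! i)"]
    by (metis in_set_conv_nth order.strict_trans)
  define E where "E = EOp p (take i es) Hole (drop (Suc i) es)"
  have "ectx_ok E" "E \<noteq> Hole" using i by (auto simp: E_def in_set_conv_nth)
  moreover have "Op p es = plug E (es ! i)" using id_take_nth_drop[OF i(1)] by (simp add: E_def)
  ultimately show ?thesis using progress_in_ectx assms(4) i by metis
qed

lemma wfty_Nil_TVar: "\<not> wfty L [] (TVar a)"
  by (auto elim: wfty.cases)

lemma has_type_CastD: "has_type L \<Gamma> e T \<Longrightarrow> e = Cast A B l \<Longrightarrow> \<Gamma> = [] \<Longrightarrow> compat A B \<and> wfty L [] A"
  by (induct rule: has_type_induct) auto

lemma progress_cast:
  assumes "wfty L [] A" "compat A B" "is_value v"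
  shows "\<exists>e'. red L (App (Cast A B l) v) e'"
  using assms(2)
proof cases
  case (4 T2 e)
  show ?thesis
  proof (cases "is_ref A")
    case True
    then obtain A1 e1 where "A = TRef A1 e1" by (cases A) auto
    then show ?thesis using assms(3) by (blast intro: red_forget)
  next
    case False
    then show ?thesis using 4 assms(3) by (blast intro: red_precheck)
  qed
qed (use assms wfty_Nil_TVar in \<open>auto intro: red.intros\<close>)

lemma progress_App_values:
  assumes "has_type L [] f (TArr T1 T2)" "is_value f" "is_value x" "lang_ok L"
  shows "\<exists>e'. red L (App f x) e'"
proof -
  consider T e where "f = Lam T e" | A B l where "f = Cast A B l"
    using canonical_forms(2)[OF assms(1,2,4)] by auto
  then show ?thesis
  proof cases
    case 1
    then show ?thesis using assms(3) by (auto intro: red_beta)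
  next
    case 2
    then have "compat A B" "wfty L [] A" using has_type_CastD[OF assms(1)] by simp_all
    then show ?thesis using progress_cast[OF _ _ assms(3)] 2 by simp
  qed
qed

lemma lang_ok_Bool: "lang_ok L \<Longrightarrow> cbase L k = boolB L \<longleftrightarrow> k = ktrue L \<or> k = kfalse L"
  by (simp add: lang_ok_def)

lemma Bool_value_cases:
  assumes "has_type L [] v (TBase (boolB L))" "is_value v" "lang_ok L"
  shows "v = Const (ktrue L) \<or> v = Const (kfalse L)"
proof -
  obtain k where "v = Const k" "cbase L k = boolB L"
    using canonical_forms(1)[OF assms] by auto
  then show ?thesis using lang_ok_Bool[OF assms(3)] by simp
qed

lemma progress:
  "has_type L \<Gamma> e T \<Longrightarrow> \<Gamma> = [] \<Longrightarrow> lang_ok L \<Longrightarrow>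
    (\<exists>e'. step L e e') \<or> is_value e \<or> (\<exists>l. e = Blame l)"
proof (induct rule: has_type_induct)
  case (t_op \<Gamma> p Ts T0 es)
  then show ?case using progress_Op[of L p Ts T0 es] by auto
next
  case (t_app \<Gamma> e1 T1 T2 e2)
  consider "\<not> is_value e1" | "is_value e1" "\<not> is_value e2" | "is_value e1" "is_value e2" by blast
  then show ?case
  proof cases
    case 1
    then show ?thesis using t_app progress_in_ectx[of "EAppL Hole e2" e1] by auto
  next
    case 2
    then show ?thesis using t_app progress_in_ectx[of "EAppR e1 Hole" e2] by auto
  next
    case 3
    then show ?thesis using t_app progress_App_values red_step by blast
  qed
next
  case (t_tapp \<Gamma> e T1 T2)
  then have "is_value e \<Longrightarrow> \<exists>e'. e = TLam e'" using canonical_forms(3)[of L "[]" e "TAll T1"] by simp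
  then show ?case using t_tapp progress_in_ectx[of "ETApp Hole T2" e]
    by (cases "is_value e") (auto intro: red_step red_tbeta)
next
  case (t_wait \<Gamma> T1 e1 e2 l)
  then show ?case using progress_in_ectx[of "EWait T1 e1 Hole l" e2]
    by (cases "is_value e2") (auto intro: red_step red_check)
next
  case (t_act \<Gamma> T1 e1 v e2 l)
  then have "is_value e2 \<Longrightarrow> e2 = Const (ktrue L) \<or> e2 = Const (kfalse L)"
    using Bool_value_cases by blast
  then show ?case using t_act progress_in_ectx[of "EAct T1 e1 Hole v l" e2]
    by (cases "is_value e2") (auto intro: red_step red_ok red_fail)
qed auto

theorem mainTheorem7:
  fixes L :: "('b,'k,'o,'l) lang" and e :: "('b,'k,'o,'l) tm" and T :: "('b,'k,'o,'l) ty"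
  assumes "lang_ok L"
    and "has_type L [] e T"
  shows "(\<exists>e'. step L e e') \<or> is_value e \<or> (\<exists>l. e = Blame l)"
  using progress[OF assms(2) refl assms(1)] .

end
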